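(* Let $\rho,\sigma$ be $d\times d$ density matrices with $\sigma$ of full rank (invertible). Then \[ \min_{U\in\mathcal{U}(d)} S(U\rho U^\dagger\,\|\,\sigma) = H\big(\lambda^\downarrow(\rho)\,\|\,\lambda^\downarrow(\sigma)\big),\qquad \max_{U\in\mathcal{U}(d)} S(U\rho U^\dagger\,\|\,\sigma) = H\big(\lambda^\downarrow(\rho)\,\|\,\lambda^\uparrow(\sigma)\big), \] and moreover the set $\{S(U\rho U^\dagger\|\sigma): U\in\mathcal{U}(d)\}$ equals the closed interval $\big[H(\lambda^\downarrow(\rho)\|\lambda^\downarrow(\sigma)),\ H(\lambda^\downarrow(\rho)\|\lambda^\uparrow(\sigma))\big]$.
   Context: A density matrix is a positive semidefinite complex matrix of trace one; $\mathcal{U}(d)$ is the group of $d\times d$ unitary matrices. The quantum relative entropy is $S(\rho\|\sigma)=\operatorname{Tr}[\rho(\log\rho-\log\sigma)]$ (defined when $\operatorname{supp}\rho\subseteq\operatorname{supp}\sigma$, with the convention $0\log 0=0$). For probability vectors $p,q$, the classical relative entropy is $H(p\|q)=\sum_j p_j(\log p_j-\log q_j)$ if $\operatorname{supp}(p)\subseteq\operatorname{supp}(q)$ (with $0\log 0=0$), and $+\infty$ otherwise. For a Hermitian matrix $A$, $\lambda^\downarrow(A)$ is the vector of its eigenvalues (with multiplicity) in decreasing order and $\lambda^\uparrow(A)$ the same in increasing order. *)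

theory Defs
  imports "Jordan_Normal_Form.Schur_Decomposition" "HOL-Library.Extended_Real"
begin

definition mtrace :: "complex mat \<Rightarrow> complex" where
  "mtrace A = (\<Sum>i<dim_row A. A $$ (i,i))"

definition hermitian_mat :: "complex mat \<Rightarrow> bool" where
  "hermitian_mat A \<longleftrightarrow> mat_adjoint A = A"

definition unitary_mat :: "nat \<Rightarrow> complex mat \<Rightarrow> bool" where
  "unitary_mat d U \<longleftrightarrow> U \<in> carrier_mat d d \<and> U * mat_adjoint U = 1\<^sub>m d \<and> mat_adjoint U * U = 1\<^sub>m d"

definition psd_mat :: "nat \<Rightarrow> complex mat \<Rightarrow> bool" where
  "psd_mat d A \<longleftrightarrow> A \<in> carrier_mat d d \<and> hermitian_mat A \<and>
     (\<forall>v \<in> carrier_vec d. 0 \<le> Re (conjugate v \<bullet> (A *\<^sub>v v)))"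

definition density_mat :: "nat \<Rightarrow> complex mat \<Rightarrow> bool" where
  "density_mat d A \<longleftrightarrow> psd_mat d A \<and> mtrace A = 1"

definition diag_of :: "real list \<Rightarrow> complex mat" where
  "diag_of xs = mat (length xs) (length xs) (\<lambda>(i,j). if i = j then complex_of_real (xs ! i) else 0)"

definition eig_desc :: "nat \<Rightarrow> complex mat \<Rightarrow> real list" where
  "eig_desc d A = (THE xs. length xs = d \<and> sorted_wrt (\<ge>) xs \<and>
      char_poly A = prod_list (map (\<lambda>x. [:- complex_of_real x, 1:]) xs))"

definition eig_asc :: "nat \<Rightarrow> complex mat \<Rightarrow> real list" where
  "eig_asc d A = rev (eig_desc d A)"

definition mat_fun :: "nat \<Rightarrow> (real \<Rightarrow> real) \<Rightarrow> complex mat \<Rightarrow> complex mat" where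
  "mat_fun d f A = (SOME B. \<exists>U xs. unitary_mat d U \<and> length xs = d \<and>
      A = U * diag_of xs * mat_adjoint U \<and> B = U * diag_of (map f xs) * mat_adjoint U)"

text \<open>Quantum relative entropy S(rho||sigma) = Tr[rho (log rho - log sigma)]
  (natural logarithm; used for full-rank sigma, where it is always defined; the
  convention 0 log 0 = 0 is automatic since rho log rho has eigenvalues x ln x
  and 0 * ln 0 = 0).\<close>
definition qrel_entropy :: "nat \<Rightarrow> complex mat \<Rightarrow> complex mat \<Rightarrow> real" where
  "qrel_entropy d \<rho> \<sigma> = Re (mtrace (\<rho> * (mat_fun d ln \<rho> - mat_fun d ln \<sigma>)))"

definition crel_entropy :: "real list \<Rightarrow> real list \<Rightarrow> ereal" where
  "crel_entropy p q = (if \<forall>j < length p. q ! j = 0 \<longrightarrow> p ! j = 0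
     then ereal (\<Sum>j < length p. if p ! j = 0 then 0 else p ! j * (ln (p ! j) - ln (q ! j)))
     else \<infinity>)"

end

theory Submission
  imports Defs "Jordan_Normal_Form.Spectral_Radius" "HOL-Combinatorics.Permutations"
begin

(*
  Diagonalise rho = V diag(p) V^* and sigma = W diag(q) W^* with p and q sorted decreasingly.
  Then S(U rho U^* || sigma) = sum_i p_i ln p_i - sum_i p_i sum_j |M_ji|^2 ln q_j with M = W^* U V,
  and (|M_ji|^2) is doubly stochastic. For a doubly stochastic D and decreasing p, c, Abel
  summation bounds sum_i p_i sum_j D_ji c_j between the antidiagonal pairing sum_i p_i c_(d-1-i)
  and the diagonal pairing sum_i p_i c_i. Every value in between is attained, without any
  continuity argument: M = cos t * 1 + i sin t * J, with J the exchange matrix, is unitary and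
  |M_ji|^2 = cos^2 t [j = i] + sin^2 t [j = d-1-i] interpolates linearly between the two pairings.
*)

section \<open>Adjoints and unitary matrices\<close>

lemma mat_adjoint_dim [simp]:
  "dim_row (mat_adjoint A) = dim_col A" "dim_col (mat_adjoint A) = dim_row A"
  by (simp_all add: mat_adjoint_def)

lemma mat_adjoint_index [simp]:
  assumes "i < dim_col A" "j < dim_row A"
  shows "mat_adjoint A $$ (i,j) = cnj (A $$ (j,i))"
proof -
  have "mat_adjoint A $$ (i,j) = map conjugate (cols A) ! i $ j"
    unfolding mat_adjoint_def mat_of_rows_def using assms by (subst index_mat, auto)
  also have "\<dots> = cnj (A $$ (j,i))" using assms by auto
  finally show ?thesis .
qed

lemma mat_adjoint_carrier [simp]: "A \<in> carrier_mat n n \<Longrightarrow> mat_adjoint A \<in> carrier_mat n n"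
  by (metis mat_adjoint_dim carrier_matD carrier_matI)

lemma mat_adjoint_adjoint [simp]: "mat_adjoint (mat_adjoint (A :: complex mat)) = A"
  by (rule eq_matI) auto

lemma complex_mult_cnj_eq_norm_square: "z * cnj z = complex_of_real ((cmod z)^2)"
  by (metis complex_norm_square of_real_power)

lemma index_mult_mat_sum:
  "i < dim_row A \<Longrightarrow> j < dim_col B \<Longrightarrow> dim_col A = dim_row B \<Longrightarrow>
   (A * B) $$ (i,j) = (\<Sum>l<dim_col A. A $$ (i,l) * B $$ (l,j))"
  by (auto simp: scalar_prod_def atLeast0LessThan intro!: sum.cong)

lemma mat_adjoint_mult:
  fixes A B :: "complex mat"
  assumes "A \<in> carrier_mat n m" "B \<in> carrier_mat m k"
  shows "mat_adjoint (A * B) = mat_adjoint B * mat_adjoint A"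
proof (rule eq_matI)
  have dims: "dim_row A = n" "dim_col A = m" "dim_row B = m" "dim_col B = k" using assms by auto
  fix i j assume "i < dim_row (mat_adjoint B * mat_adjoint A)" "j < dim_col (mat_adjoint B * mat_adjoint A)"
  hence ij: "i < k" "j < n" using dims by auto
  have "mat_adjoint (A * B) $$ (i,j) = cnj ((A * B) $$ (j,i))" using ij dims by simp
  also have "\<dots> = cnj (\<Sum>l<m. A$$(j,l) * B$$(l,i))" using ij dims by (subst index_mult_mat_sum) auto
  also have "\<dots> = (mat_adjoint B * mat_adjoint A) $$ (i,j)"
    using ij dims by (subst index_mult_mat_sum) (auto simp: mult.commute)
  finally show "mat_adjoint (A * B) $$ (i,j) = (mat_adjoint B * mat_adjoint A) $$ (i,j)" .
qed (use assms in auto)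
lemma diag_of_carrier [simp]: "diag_of xs \<in> carrier_mat (length xs) (length xs)"
  and diag_of_dim [simp]: "dim_row (diag_of xs) = length xs" "dim_col (diag_of xs) = length xs"
  and diag_of_index [simp]: "i < length xs \<Longrightarrow> j < length xs \<Longrightarrow>
    diag_of xs $$ (i,j) = (if i = j then complex_of_real (xs ! i) else 0)"
  by (simp_all add: diag_of_def)

lemma index_mult_diag:
  assumes "U \<in> carrier_mat d d" "length xs = d" "k < d" "i < d"
  shows "(U * diag_of xs) $$ (k,i) = U$$(k,i) * xs!i"
  using assms by (simp del: index_mult_mat add: index_mult_mat_sum if_distrib cong: if_cong)

lemma index_mult_diag_adjoint:
  assumes U: "U \<in> carrier_mat d d" and l: "length xs = d" and k: "k < d" and m: "m < d"
  shows "(U * diag_of xs * mat_adjoint U) $$ (k,m) = (\<Sum>i<d. U$$(k,i) * xs!i * cnj (U$$(m,i)))"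
proof -
  have dims: "dim_row U = d" "dim_col U = d" using U by auto
  have "(U * diag_of xs * mat_adjoint U) $$ (k,m) = (\<Sum>i<d. (U * diag_of xs) $$ (k,i) * mat_adjoint U $$ (i,m))"
    using dims l k m by (subst index_mult_mat_sum, auto)
  also have "\<dots> = (\<Sum>i<d. U$$(k,i) * xs!i * cnj (U$$(m,i)))"
    using U l k m by (intro sum.cong refl) (simp del: index_mult_mat add: index_mult_diag)
  finally show ?thesis .
qed

lemma index_adjoint_mult_mult:
  assumes U: "U \<in> carrier_mat d d" and A: "A \<in> carrier_mat d d" and i: "i < d" and j: "j < d"
  shows "(mat_adjoint U * A * U) $$ (i,j) = (\<Sum>k<d. \<Sum>l<d. cnj (U$$(k,i)) * A$$(k,l) * U$$(l,j))"
proof -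
  have dims: "dim_row U = d" "dim_col U = d" "dim_row A = d" "dim_col A = d" using U A by auto
  have UA: "(mat_adjoint U * A) $$ (i,l) = (\<Sum>k<d. cnj (U$$(k,i)) * A$$(k,l))" if "l < d" for l
    using dims i that by (subst index_mult_mat_sum, auto intro!: sum.cong)
  have "(mat_adjoint U * A * U) $$ (i,j) = (\<Sum>l<d. (mat_adjoint U * A) $$ (i,l) * U$$(l,j))"
    using dims i j by (subst index_mult_mat_sum, auto)
  also have "\<dots> = (\<Sum>l<d. \<Sum>k<d. cnj (U$$(k,i)) * A$$(k,l) * U$$(l,j))"
    by (simp add: UA sum_distrib_right)
  also have "\<dots> = (\<Sum>k<d. \<Sum>l<d. cnj (U$$(k,i)) * A$$(k,l) * U$$(l,j))"
    by (rule sum.swap)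
  finally show ?thesis .
qed
lemma unitary_mat_carrier: "unitary_mat d U \<Longrightarrow> U \<in> carrier_mat d d"
  by (simp add: unitary_mat_def)

lemma unitary_mat_rows_orthonormal:
  assumes "unitary_mat d U" "j < d" "l < d"
  shows "(\<Sum>i<d. U$$(j,i) * cnj (U$$(l,i))) = of_bool (j = l)"
proof -
  have "(\<Sum>i<d. U$$(j,i) * cnj (U$$(l,i))) = (U * mat_adjoint U) $$ (j,l)"
    using assms unitary_mat_carrier[OF assms(1)] by (subst index_mult_mat_sum, auto)
  also have "\<dots> = of_bool (j = l)" using assms unfolding unitary_mat_def by simp
  finally show ?thesis .
qed

lemma unitary_mat_cols_orthonormal:
  assumes "unitary_mat d U" "j < d" "l < d"
  shows "(\<Sum>i<d. cnj (U$$(i,j)) * U$$(i,l)) = of_bool (j = l)"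
proof -
  have "(\<Sum>i<d. cnj (U$$(i,j)) * U$$(i,l)) = (mat_adjoint U * U) $$ (j,l)"
    using assms unitary_mat_carrier[OF assms(1)] by (subst index_mult_mat_sum, auto)
  also have "\<dots> = of_bool (j = l)" using assms unfolding unitary_mat_def by simp
  finally show ?thesis .
qed

lemma unitary_matI:
  assumes U: "U \<in> carrier_mat d d"
    and rows: "\<And>j l. j < d \<Longrightarrow> l < d \<Longrightarrow> (\<Sum>i<d. U$$(j,i) * cnj (U$$(l,i))) = of_bool (j = l)"
  shows "unitary_mat d U"
proof -
  have right: "U * mat_adjoint U = 1\<^sub>m d"
  proof (rule eq_matI)
    fix j l assume "j < dim_row (1\<^sub>m d)" "l < dim_col (1\<^sub>m d)"
    with U rows[of j l] show "(U * mat_adjoint U) $$ (j,l) = 1\<^sub>m d $$ (j,l)"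
      by (subst index_mult_mat_sum) auto
  qed (use U in auto)
  have "mat_adjoint U * U = 1\<^sub>m d"
    by (rule mat_mult_left_right_inverse[OF U _ right]) (use U in simp)
  with U right show ?thesis unfolding unitary_mat_def by auto
qed

lemma unitary_mat_mult:
  assumes A: "unitary_mat d A" and B: "unitary_mat d B"
  shows "unitary_mat d (A * B)"
proof -
  have Ac: "A \<in> carrier_mat d d" and Bc: "B \<in> carrier_mat d d"
    using A B by (simp_all add: unitary_mat_carrier)
  have aA: "mat_adjoint A \<in> carrier_mat d d" and aB: "mat_adjoint B \<in> carrier_mat d d" using Ac Bc by auto
  have "A * B * mat_adjoint (A * B) = A * B * (mat_adjoint B * mat_adjoint A)"
    by (simp add: mat_adjoint_mult[OF Ac Bc])
  also have "\<dots> = A * (B * (mat_adjoint B * mat_adjoint A))"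
    using Ac Bc aA aB by (metis assoc_mult_mat mult_carrier_mat)
  also have "B * (mat_adjoint B * mat_adjoint A) = (B * mat_adjoint B) * mat_adjoint A"
    using Bc aA aB by (simp add: assoc_mult_mat[of B d d "mat_adjoint B" d])
  also have "\<dots> = mat_adjoint A" using B aA unfolding unitary_mat_def by (metis left_mult_one_mat)
  also have "A * mat_adjoint A = 1\<^sub>m d" using A unfolding unitary_mat_def by simp
  finally have right: "A * B * mat_adjoint (A * B) = 1\<^sub>m d" .
  have "mat_adjoint (A * B) * (A * B) = 1\<^sub>m d"
    by (rule mat_mult_left_right_inverse[OF _ _ right]) (use Ac Bc in auto)
  with right Ac Bc show ?thesis unfolding unitary_mat_def by auto
qed

lemma unitary_mat_adjoint: "unitary_mat d A \<Longrightarrow> unitary_mat d (mat_adjoint A)"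
  unfolding unitary_mat_def by auto

lemma unitary_mat_one: "unitary_mat d (1\<^sub>m d)"
proof -
  have "mat_adjoint (1\<^sub>m d) = (1\<^sub>m d :: complex mat)" by (rule eq_matI) auto
  thus ?thesis unfolding unitary_mat_def by simp
qed

lemma unitary_sandwich_cancel:
  assumes uV: "unitary_mat d V" and uW: "unitary_mat d W" and M: "M \<in> carrier_mat d d"
  shows "mat_adjoint W * (W * M * mat_adjoint V * V) = M"
proof -
  have Vc: "V \<in> carrier_mat d d" and Wc: "W \<in> carrier_mat d d"
    using uV uW by (simp_all add: unitary_mat_carrier)
  have WM: "W * M \<in> carrier_mat d d" using Wc M by simp
  have "W * M * mat_adjoint V * V = W * M * (mat_adjoint V * V)"
    by (rule assoc_mult_mat[OF WM _ Vc]) (use Vc in simp)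
  also have "\<dots> = W * M" using uV right_mult_one_mat[OF WM] unfolding unitary_mat_def by simp
  finally have "mat_adjoint W * (W * M * mat_adjoint V * V) = (mat_adjoint W * W) * M"
    using Wc M by (simp add: assoc_mult_mat[of _ d d W d M d])
  also have "\<dots> = M" using uW M unfolding unitary_mat_def by simp
  finally show ?thesis .
qed

lemma hermitian_mat_index:
  assumes "hermitian_mat A" "A \<in> carrier_mat n n" "i < n" "j < n"
  shows "A$$(i,j) = cnj (A$$(j,i))"
proof -
  have "A$$(i,j) = mat_adjoint A $$ (i,j)" using assms(1) unfolding hermitian_mat_def by simp
  also have "\<dots> = cnj (A$$(j,i))" using assms by auto
  finally show ?thesis .
qed

lemma hermitian_matI:
  assumes A: "A \<in> carrier_mat n n" and h: "\<And>i j. i < n \<Longrightarrow> j < n \<Longrightarrow> A$$(i,j) = cnj (A$$(j,i))"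
  shows "hermitian_mat A"
  unfolding hermitian_mat_def
proof (rule eq_matI)
  fix i j assume "i < dim_row A" "j < dim_col A"
  hence ij: "i < n" "j < n" using A by auto
  have "mat_adjoint A $$ (i,j) = cnj (A$$(j,i))" using ij A by auto
  also have "\<dots> = A$$(i,j)" using h[OF ij] by simp
  finally show "mat_adjoint A $$ (i,j) = A$$(i,j)" .
qed (use A in auto)

lemma hermitian_mat_adjoint_conj:
  assumes hA: "hermitian_mat A" and A: "A \<in> carrier_mat n n" and W: "W \<in> carrier_mat n n"
  shows "hermitian_mat (mat_adjoint W * A * W)"
proof -
  have aW: "mat_adjoint W \<in> carrier_mat n n" using W by auto
  have "mat_adjoint (mat_adjoint W * A * W) = mat_adjoint W * mat_adjoint (mat_adjoint W * A)"
    by (rule mat_adjoint_mult) (use W A aW in auto)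
  also have "mat_adjoint (mat_adjoint W * A) = mat_adjoint A * W"
    by (simp add: mat_adjoint_mult[OF aW A])
  also have "mat_adjoint A = A" using hA unfolding hermitian_mat_def by simp
  also have "mat_adjoint W * (A * W) = mat_adjoint W * A * W"
    by (simp add: assoc_mult_mat[OF aW A W])
  finally show ?thesis unfolding hermitian_mat_def .
qed

section \<open>Spectral theorem for Hermitian matrices\<close>

lemma householder_mat_unitary:
  fixes w :: "nat \<Rightarrow> complex"
  assumes sumw: "(\<Sum>k<N. w k * cnj (w k)) = complex_of_real s" and s0: "s \<noteq> 0"
  shows "unitary_mat N (mat N N (\<lambda>(i,j). of_bool (i = j) - complex_of_real (2 / s) * w i * cnj (w j)))"
    (is "unitary_mat N ?W")
proof (rule unitary_matI)
  show "?W \<in> carrier_mat N N" by simp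
  define a where "a = complex_of_real (2 / s)"
  have cnja: "cnj a = a" unfolding a_def by simp
  have aa: "a * a * complex_of_real s = 2 * a"
    using s0 unfolding a_def by (simp flip: of_real_mult) (simp add: field_simps)
  fix j l assume jl: "j < N" "l < N"
  have "(\<Sum>i<N. ?W$$(j,i) * cnj (?W$$(l,i))) =
     (\<Sum>i<N. (of_bool (j = i) - a * w j * cnj (w i)) * (of_bool (l = i) - a * cnj (w l) * w i))"
    using jl by (intro sum.cong) (auto simp: a_def)
  also have "\<dots> = (\<Sum>i<N. of_bool (j = i) * of_bool (l = i)
        - of_bool (j = i) * (a * cnj (w l) * w i)
        - of_bool (l = i) * (a * w j * cnj (w i))
        + a * a * w j * cnj (w l) * (w i * cnj (w i)))"
    by (rule sum.cong) (simp_all add: algebra_simps)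
  also have "\<dots> = (\<Sum>i<N. of_bool (j = i) * of_bool (l = i))
        - (\<Sum>i<N. of_bool (j = i) * (a * cnj (w l) * w i))
        - (\<Sum>i<N. of_bool (l = i) * (a * w j * cnj (w i)))
        + a * a * w j * cnj (w l) * (\<Sum>i<N. w i * cnj (w i))"
    by (simp add: sum.distrib sum_subtractf sum_distrib_left)
  also have "\<dots> = of_bool (j = l) - a * cnj (w l) * w j - a * w j * cnj (w l)
        + a * a * w j * cnj (w l) * complex_of_real s"
    using jl by (simp add: sumw)
  also have "\<dots> = of_bool (j = l)"
    using aa by (simp add: algebra_simps) (metis (no_types, lifting) mult.assoc mult.commute)
  finally show "(\<Sum>i<N. ?W$$(j,i) * cnj (?W$$(l,i))) = of_bool (j = l)" .
qed

text \<open>The Householder reflection \<open>1 - 2 w w\<^sup>* / |w|\<^sup>2\<close> with \<open>w = e\<^sub>0 - u\<close>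
  maps \<open>e\<^sub>0\<close> to \<open>u\<close>.\<close>

lemma unitary_mat_first_column_real:
  fixes u :: "nat \<Rightarrow> complex" and r :: real
  assumes N: "N > 0" and norm: "(\<Sum>k<N. u k * cnj (u k)) = 1" and u0: "u 0 = complex_of_real r" and r1: "r \<noteq> 1"
  shows "\<exists>W. unitary_mat N W \<and> (\<forall>k<N. W $$ (k,0) = u k)"
proof -
  define w where "w k = of_bool (k = 0) - u k" for k
  define s where "s = 2 * (1 - r)"
  have s0: "s \<noteq> 0" using r1 unfolding s_def by auto
  have "(\<Sum>k<N. w k * cnj (w k)) = (\<Sum>k<N. (if k = 0 then 1 - u k - cnj (u k) else 0) + u k * cnj (u k))"
    by (rule sum.cong) (auto simp: w_def algebra_simps)
  also have "\<dots> = 1 - u 0 - cnj (u 0) + 1" using N norm by (simp add: sum.distrib)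
  also have "\<dots> = complex_of_real s" unfolding u0 s_def by (simp add: complex_eq_iff)
  finally have sumw: "(\<Sum>k<N. w k * cnj (w k)) = complex_of_real s" .
  define W where "W = mat N N (\<lambda>(i,j). of_bool (i = j) - complex_of_real (2 / s) * w i * cnj (w j))"
  have w0: "cnj (w 0) = complex_of_real (1 - r)" unfolding w_def u0 by simp
  have "2 / s * (1 - r) = 1" using r1 unfolding s_def by (simp add: field_simps)
  hence a1: "complex_of_real (2 / s) * complex_of_real (1 - r) = 1" by (simp only: of_real_mult[symmetric]) simp
  have "W $$ (k,0) = u k" if "k < N" for k
  proof -
    have "W $$ (k,0) = of_bool (k = 0) - w k * (complex_of_real (2 / s) * cnj (w 0))"
      using that N unfolding W_def by (simp add: mult_ac)
    also have "\<dots> = u k" unfolding w0 a1 by (simp add: w_def)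
    finally show ?thesis .
  qed
  thus ?thesis using householder_mat_unitary[OF sumw s0] unfolding W_def by blast
qed

lemma unit_vector_first_entry_norm_one:
  fixes v :: "nat \<Rightarrow> complex"
  assumes N: "N > 0" and norm: "(\<Sum>k<N. v k * cnj (v k)) = 1" and v0: "cmod (v 0) = 1"
    and k: "k < N" "k \<noteq> 0"
  shows "v k = 0"
proof -
  have "complex_of_real (\<Sum>k<N. (cmod (v k))^2) = 1" using norm by (simp add: complex_mult_cnj_eq_norm_square)
  hence "(\<Sum>k<N. (cmod (v k))^2) = 1" by (simp only: of_real_eq_1_iff)
  moreover have "(\<Sum>k<N. (cmod (v k))^2) = (cmod (v 0))^2 + (\<Sum>k\<in>{..<N}-{0}. (cmod (v k))^2)"
    using N by (subst sum.remove[of _ 0]) auto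
  ultimately have "(\<Sum>k\<in>{..<N}-{0}. (cmod (v k))^2) = 0" using v0 by simp
  hence "\<forall>k\<in>{..<N}-{0}. (cmod (v k))^2 = 0" by (subst (asm) sum_nonneg_eq_0_iff) auto
  thus ?thesis using k by auto
qed

lemma unitary_mat_first_column:
  fixes u :: "nat \<Rightarrow> complex"
  assumes N: "N > 0" and norm: "(\<Sum>k<N. u k * cnj (u k)) = 1"
  shows "\<exists>W c. unitary_mat N W \<and> c \<noteq> 0 \<and> (\<forall>k<N. W $$ (k,0) = c * u k)"
proof -
  define \<phi> where "\<phi> = (if u 0 = 0 then 1 else cnj (u 0) / complex_of_real (cmod (u 0)))"
  define v where "v k = \<phi> * u k" for k
  have e: "u 0 * cnj (u 0) = complex_of_real (cmod (u 0)) * complex_of_real (cmod (u 0))"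
    using complex_mult_cnj_eq_norm_square[of "u 0"] by (simp add: power2_eq_square)
  have phi: "\<phi> * cnj \<phi> = 1" unfolding \<phi>_def
    using e by (auto simp: field_simps mult.commute[of "cnj (u 0)"])
  hence phi0: "\<phi> \<noteq> 0" by auto
  have v0: "v 0 = complex_of_real (cmod (u 0))"
    unfolding v_def \<phi>_def using e by (auto simp: field_simps mult.commute[of "cnj (u 0)"])
  have vnorm: "(\<Sum>k<N. v k * cnj (v k)) = 1"
  proof -
    have "(\<Sum>k<N. v k * cnj (v k)) = (\<Sum>k<N. (\<phi> * cnj \<phi>) * (u k * cnj (u k)))"
      unfolding v_def by (rule sum.cong, auto simp: algebra_simps)
    thus ?thesis using phi norm by simp
  qed
  show ?thesis
  proof (cases "cmod (u 0) = 1")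
    case False
    from unitary_mat_first_column_real[OF N vnorm v0 False] obtain W where "unitary_mat N W" "\<forall>k<N. W $$ (k,0) = v k" by blast
    thus ?thesis using phi0 unfolding v_def by blast
  next
    case True
    have vk: "v k = 0" if "k < N" "k \<noteq> 0" for k
      using unit_vector_first_entry_norm_one[OF N vnorm _ that] True v0 by simp
    have "unitary_mat N (1\<^sub>m N)" by (rule unitary_mat_one)
    moreover have "\<forall>k<N. (1\<^sub>m N) $$ (k,0) = \<phi> * u k"
      using vk v0 True N unfolding v_def by auto
    ultimately show ?thesis using phi0 by blast
  qed
qed

lemma unit_eigenvector_exists:
  assumes A: "A \<in> carrier_mat N N" and N: "N > 0"
  shows "\<exists>lam u. (\<Sum>k<N. u k * cnj (u k)) = 1 \<and> (\<forall>k<N. (\<Sum>l<N. A$$(k,l) * u l) = lam * u k)"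
proof -
  obtain lam where "lam \<in> spectrum A" using spectrum_non_empty[OF A N] by blast
  then obtain v where ev: "eigenvector A v lam" unfolding spectrum_def eigenvalue_def by auto
  have v: "v \<in> carrier_vec N" and v0: "v \<noteq> 0\<^sub>v N" and Av: "A *\<^sub>v v = lam \<cdot>\<^sub>v v"
    using ev A unfolding eigenvector_def by auto
  have comp: "(\<Sum>l<N. A$$(k,l) * v $ l) = lam * v $ k" if k: "k < N" for k
  proof -
    have "(A *\<^sub>v v) $ k = (\<Sum>l<N. A$$(k,l) * v $ l)"
      using A v k by (auto simp: scalar_prod_def atLeast0LessThan intro!: sum.cong)
    thus ?thesis using Av v k by simp
  qed
  obtain k0 where k0: "k0 < N" "v $ k0 \<noteq> 0"
    using v v0 by (metis carrier_vecD index_zero_vec(1) eq_vecI index_zero_vec(2))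
  define ns where "ns = (\<Sum>k<N. (cmod (v $ k))^2)"
  have "(cmod (v $ k0))^2 \<le> ns" unfolding ns_def using k0
    by (intro member_le_sum, auto)
  moreover have "(cmod (v $ k0))^2 > 0" using k0 by simp
  ultimately have ns: "ns > 0" by linarith
  define u where "u k = v $ k / complex_of_real (sqrt ns)" for k
  have "(\<Sum>k<N. u k * cnj (u k)) = (\<Sum>k<N. complex_of_real ((cmod (v $ k))^2 / ns))"
  proof (rule sum.cong)
    fix k
    have sq: "complex_of_real (sqrt ns) * complex_of_real (sqrt ns) = complex_of_real ns"
      using ns by (simp only: of_real_mult[symmetric] real_sqrt_mult_self, simp)
    have "u k * cnj (u k) = (v $ k * cnj (v $ k)) / (complex_of_real (sqrt ns) * complex_of_real (sqrt ns))"
      unfolding u_def by simp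
    also have "\<dots> = complex_of_real ((cmod (v $ k))^2 / ns)" unfolding sq complex_mult_cnj_eq_norm_square by simp
    finally show "u k * cnj (u k) = complex_of_real ((cmod (v $ k))^2 / ns)" .
  qed simp
  also have "\<dots> = complex_of_real ((\<Sum>k<N. (cmod (v $ k))^2) / ns)"
    by (simp only: sum_divide_distrib of_real_sum)
  also have "\<dots> = complex_of_real (ns / ns)" unfolding ns_def by simp
  also have "\<dots> = 1" using ns by simp
  finally have un: "(\<Sum>k<N. u k * cnj (u k)) = 1" .
  have "(\<Sum>l<N. A$$(k,l) * u l) = lam * u k" if k: "k < N" for k
  proof -
    have "(\<Sum>l<N. A$$(k,l) * u l) = (\<Sum>l<N. A$$(k,l) * v $ l) / complex_of_real (sqrt ns)"
      unfolding u_def by (simp add: sum_divide_distrib)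
    thus ?thesis using comp[OF k] unfolding u_def by simp
  qed
  thus ?thesis using un by blast
qed

lemma unitary_mat_eigenvector_first_column:
  assumes A: "A \<in> carrier_mat N N" and N: "N > 0"
  shows "\<exists>W lam. unitary_mat N W \<and> (\<forall>k<N. (\<Sum>l<N. A$$(k,l) * W$$(l,0)) = lam * W$$(k,0))"
proof -
  obtain lam u where un: "(\<Sum>k<N. u k * cnj (u k)) = 1"
    and eu: "\<And>k. k < N \<Longrightarrow> (\<Sum>l<N. A$$(k,l) * u l) = lam * u k"
    using unit_eigenvector_exists[OF A N] by auto
  obtain W c where uW: "unitary_mat N W" and W0: "\<And>k. k < N \<Longrightarrow> W $$ (k,0) = c * u k"
    using unitary_mat_first_column[OF N un] by auto
  have "(\<Sum>l<N. A$$(k,l) * W$$(l,0)) = lam * W$$(k,0)" if k: "k < N" for k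
  proof -
    have "(\<Sum>l<N. A$$(k,l) * W$$(l,0)) = c * (\<Sum>l<N. A$$(k,l) * u l)"
      by (simp add: W0 sum_distrib_left mult.left_commute)
    also have "\<dots> = lam * W$$(k,0)" by (simp add: eu[OF k] W0[OF k] mult.left_commute)
    finally show ?thesis .
  qed
  with uW show ?thesis by blast
qed

lemma hermitian_deflation:
  assumes A: "A \<in> carrier_mat (Suc m) (Suc m)" and hA: "hermitian_mat A"
  shows "\<exists>W lam. unitary_mat (Suc m) W \<and> (\<forall>i<Suc m.
     (mat_adjoint W * A * W) $$ (i,0) = of_bool (i = 0) * lam \<and>
     (mat_adjoint W * A * W) $$ (0,i) = of_bool (i = 0) * lam)"
proof -
  define N where "N = Suc m"
  have A: "A \<in> carrier_mat N N" using A unfolding N_def .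
  obtain W lam where uW: "unitary_mat N W"
    and col0: "\<And>k. k < N \<Longrightarrow> (\<Sum>l<N. A$$(k,l) * W$$(l,0)) = lam * W$$(k,0)"
    using unitary_mat_eigenvector_first_column[OF A] unfolding N_def by auto
  have Wc: "W \<in> carrier_mat N N" using uW by (rule unitary_mat_carrier)
  define B where "B = mat_adjoint W * A * W"
  have Bc: "B \<in> carrier_mat N N" unfolding B_def using Wc A by auto
  have hB: "hermitian_mat B" unfolding B_def using hA A Wc by (rule hermitian_mat_adjoint_conj)
  have N0: "0 < N" by (simp add: N_def)
  have B0: "B $$ (i,0) = of_bool (i = 0) * lam" if i: "i < N" for i
  proof -
    have "B $$ (i,0) = (\<Sum>k<N. cnj (W$$(k,i)) * (\<Sum>l<N. A$$(k,l) * W$$(l,0)))"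
      unfolding B_def using Wc A i
      by (subst index_adjoint_mult_mult) (auto simp: sum_distrib_left mult.assoc)
    also have "\<dots> = lam * (\<Sum>k<N. cnj (W$$(k,i)) * W$$(k,0))"
      by (simp add: col0 sum_distrib_left mult_ac)
    also have "\<dots> = of_bool (i = 0) * lam"
      using unitary_mat_cols_orthonormal[OF uW i N0] by simp
    finally show ?thesis .
  qed
  have "B $$ (0,i) = of_bool (i = 0) * lam" if i: "i < N" for i
    using hermitian_mat_index[OF hB Bc N0 i] B0[OF i] B0[OF N0] by auto
  with B0 uW show ?thesis unfolding B_def N_def by blast
qed

definition one_dsum_mat :: "complex mat \<Rightarrow> complex mat" where
  "one_dsum_mat V = mat (Suc (dim_row V)) (Suc (dim_col V))
     (\<lambda>(i,j). if i = 0 \<or> j = 0 then of_bool (i = j) else V $$ (i - 1, j - 1))"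

lemma one_dsum_mat_carrier: "V \<in> carrier_mat m m \<Longrightarrow> one_dsum_mat V \<in> carrier_mat (Suc m) (Suc m)"
  by (simp add: one_dsum_mat_def)

lemma one_dsum_mat_index [simp]:
  "one_dsum_mat V $$ (0,0) = 1"
  "j < dim_col V \<Longrightarrow> one_dsum_mat V $$ (0, Suc j) = 0"
  "i < dim_row V \<Longrightarrow> one_dsum_mat V $$ (Suc i, 0) = 0"
  "i < dim_row V \<Longrightarrow> j < dim_col V \<Longrightarrow> one_dsum_mat V $$ (Suc i, Suc j) = V $$ (i,j)"
  by (simp_all add: one_dsum_mat_def)

lemma unitary_mat_one_dsum:
  assumes uV: "unitary_mat m V"
  shows "unitary_mat (Suc m) (one_dsum_mat V)"
proof (rule unitary_matI)
  have Vc: "V \<in> carrier_mat m m" using uV by (rule unitary_mat_carrier)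
  show "one_dsum_mat V \<in> carrier_mat (Suc m) (Suc m)" using Vc by (rule one_dsum_mat_carrier)
  fix j l assume jl: "j < Suc m" "l < Suc m"
  have split: "(\<Sum>i<Suc m. one_dsum_mat V $$ (j,i) * cnj (one_dsum_mat V $$ (l,i))) =
      one_dsum_mat V $$ (j,0) * cnj (one_dsum_mat V $$ (l,0)) +
      (\<Sum>i<m. one_dsum_mat V $$ (j, Suc i) * cnj (one_dsum_mat V $$ (l, Suc i)))"
    by (rule sum.lessThan_Suc_shift)
  show "(\<Sum>i<Suc m. one_dsum_mat V $$ (j,i) * cnj (one_dsum_mat V $$ (l,i))) = of_bool (j = l)"
  proof (cases j; cases l)
    fix j' l' assume j: "j = Suc j'" and l: "l = Suc l'"
    have "j' < m" "l' < m" using jl j l by auto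
    thus ?thesis using split unitary_mat_rows_orthonormal[OF uV] unfolding j l using Vc by simp
  qed (use split jl Vc in auto)
qed

lemma sum_lessThan_Suc_shift2: "(\<Sum>k<Suc m. \<Sum>l<Suc m. f k l) = f 0 0 + (\<Sum>l<m. f 0 (Suc l)) + (\<Sum>k<m. f (Suc k) 0)
   + (\<Sum>k<m. \<Sum>l<m. f (Suc k) (Suc l))"
proof -
  have inner: "\<And>k. (\<Sum>l<Suc m. f k l) = f k 0 + (\<Sum>l<m. f k (Suc l))" by (rule sum.lessThan_Suc_shift)
  have "(\<Sum>k<Suc m. \<Sum>l<Suc m. f k l) = (\<Sum>l<Suc m. f 0 l) + (\<Sum>k<m. \<Sum>l<Suc m. f (Suc k) l)"
    by (rule sum.lessThan_Suc_shift)
  also have "\<dots> = f 0 0 + (\<Sum>l<m. f 0 (Suc l)) + (\<Sum>k<m. f (Suc k) 0 + (\<Sum>l<m. f (Suc k) (Suc l)))"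
    by (simp only: inner)
  also have "\<dots> = f 0 0 + (\<Sum>l<m. f 0 (Suc l)) + (\<Sum>k<m. f (Suc k) 0) + (\<Sum>k<m. \<Sum>l<m. f (Suc k) (Suc l))"
    by (simp only: sum.distrib add.assoc)
  finally show ?thesis .
qed

lemma adjoint_conj_mult:
  fixes X Y A :: "complex mat"
  assumes X: "X \<in> carrier_mat n n" and Y: "Y \<in> carrier_mat n n" and A: "A \<in> carrier_mat n n"
  shows "mat_adjoint (X * Y) * A * (X * Y) = mat_adjoint Y * (mat_adjoint X * A * X) * Y"
proof -
  have aX: "mat_adjoint X \<in> carrier_mat n n" and aY: "mat_adjoint Y \<in> carrier_mat n n" using X Y by auto
  have "mat_adjoint (X * Y) * A * (X * Y) = mat_adjoint Y * (mat_adjoint X * A) * (X * Y)"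
    using aY aX A by (simp add: mat_adjoint_mult[OF X Y] assoc_mult_mat[OF aY aX A])
  also have "\<dots> = mat_adjoint Y * ((mat_adjoint X * A) * (X * Y))"
    using aY aX A X Y by (subst assoc_mult_mat[of _ n n _ n _ n], auto)
  also have "(mat_adjoint X * A) * (X * Y) = (mat_adjoint X * A * X) * Y"
    using aX A X Y by (subst assoc_mult_mat[of _ n n X n Y n], auto)
  also have "mat_adjoint Y * (mat_adjoint X * A * X * Y) = mat_adjoint Y * (mat_adjoint X * A * X) * Y"
    using aY aX A X Y by (subst assoc_mult_mat[of _ n n _ n Y n], auto)
  finally show ?thesis .
qed

lemma one_dsum_conj_offdiag_zero:
  assumes B: "B \<in> carrier_mat (Suc m) (Suc m)" and V: "V \<in> carrier_mat m m"
    and border: "\<forall>i<Suc m. B $$ (i,0) = of_bool (i = 0) * lam \<and> B $$ (0,i) = of_bool (i = 0) * lam"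
    and diag: "\<forall>i<m. \<forall>j<m. i \<noteq> j \<longrightarrow>
      (mat_adjoint V * mat m m (\<lambda>(k,l). B $$ (Suc k, Suc l)) * V) $$ (i,j) = 0"
    and ij: "i < Suc m" "j < Suc m" "i \<noteq> j"
  shows "(mat_adjoint (one_dsum_mat V) * B * one_dsum_mat V) $$ (i,j) = 0"
proof -
  define V1 where "V1 = one_dsum_mat V"
  have V1c: "V1 \<in> carrier_mat (Suc m) (Suc m)" unfolding V1_def using V by (rule one_dsum_mat_carrier)
  have Vd: "dim_row V = m" "dim_col V = m" using V by auto
  have B0: "B $$ (Suc k, 0) = 0" "B $$ (0, Suc k) = 0" if "k < m" for k
    using border that by auto
  have "(mat_adjoint V1 * B * V1) $$ (i,j) = (\<Sum>k<Suc m. \<Sum>l<Suc m. cnj (V1$$(k,i)) * B$$(k,l) * V1$$(l,j))"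
    using V1c B ij by (subst index_adjoint_mult_mult, auto)
  also have "\<dots> = cnj (V1$$(0,i)) * B$$(0,0) * V1$$(0,j)
      + (\<Sum>k<m. \<Sum>l<m. cnj (V1$$(Suc k,i)) * B$$(Suc k,Suc l) * V1$$(Suc l,j))"
    unfolding sum_lessThan_Suc_shift2 using B0 by simp
  also have "cnj (V1$$(0,i)) * B$$(0,0) * V1$$(0,j) = 0"
    using ij Vd unfolding V1_def by (cases i; cases j; auto)
  also have "(\<Sum>k<m. \<Sum>l<m. cnj (V1$$(Suc k,i)) * B$$(Suc k,Suc l) * V1$$(Suc l,j)) = 0"
  proof (cases i; cases j)
    fix i' j' assume i: "i = Suc i'" and j: "j = Suc j'"
    have i'j': "i' < m" "j' < m" "i' \<noteq> j'" using ij i j by auto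
    have "(\<Sum>k<m. \<Sum>l<m. cnj (V1$$(Suc k,i)) * B$$(Suc k,Suc l) * V1$$(Suc l,j))
       = (mat_adjoint V * mat m m (\<lambda>(k,l). B $$ (Suc k, Suc l)) * V) $$ (i',j')"
      using V i'j' Vd unfolding i j V1_def by (subst index_adjoint_mult_mult) auto
    thus ?thesis using diag i'j' by simp
  qed (use ij Vd in \<open>auto simp: V1_def\<close>)
  finally show ?thesis unfolding V1_def by simp
qed

lemma hermitian_unitary_diagonalizable:
  "A \<in> carrier_mat n n \<Longrightarrow> hermitian_mat A \<Longrightarrow>
   \<exists>U. unitary_mat n U \<and> (\<forall>i<n. \<forall>j<n. i \<noteq> j \<longrightarrow> (mat_adjoint U * A * U) $$ (i,j) = 0)"
proof (induction n arbitrary: A)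
  case 0
  then show ?case using unitary_mat_one by blast
next
  case (Suc m)
  obtain W lam where uW: "unitary_mat (Suc m) W" and border: "\<forall>i<Suc m.
     (mat_adjoint W * A * W) $$ (i,0) = of_bool (i = 0) * lam \<and>
     (mat_adjoint W * A * W) $$ (0,i) = of_bool (i = 0) * lam"
    using hermitian_deflation[OF Suc.prems] by blast
  have Wc: "W \<in> carrier_mat (Suc m) (Suc m)" using uW by (rule unitary_mat_carrier)
  define B where "B = mat_adjoint W * A * W"
  have Bc: "B \<in> carrier_mat (Suc m) (Suc m)" unfolding B_def using Wc Suc.prems by auto
  have hB: "hermitian_mat B" unfolding B_def using Suc.prems Wc by (intro hermitian_mat_adjoint_conj)
  define B' where "B' = mat m m (\<lambda>(k,l). B $$ (Suc k, Suc l))"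
  have B'c: "B' \<in> carrier_mat m m" unfolding B'_def by simp
  have hB': "hermitian_mat B'"
  proof (rule hermitian_matI[OF B'c])
    fix i j assume "i < m" "j < m"
    thus "B' $$ (i,j) = cnj (B' $$ (j,i))"
      using hermitian_mat_index[OF hB Bc, of "Suc i" "Suc j"] by (simp add: B'_def)
  qed
  obtain V where uV: "unitary_mat m V"
    and diag: "\<forall>i<m. \<forall>j<m. i \<noteq> j \<longrightarrow> (mat_adjoint V * B' * V) $$ (i,j) = 0"
    using Suc.IH[OF B'c hB'] by blast
  have Vc: "V \<in> carrier_mat m m" using uV by (rule unitary_mat_carrier)
  have "unitary_mat (Suc m) (W * one_dsum_mat V)"
    using uW unitary_mat_one_dsum[OF uV] by (rule unitary_mat_mult)
  moreover have "mat_adjoint (W * one_dsum_mat V) * A * (W * one_dsum_mat V) =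
      mat_adjoint (one_dsum_mat V) * B * one_dsum_mat V"
    unfolding B_def using Wc one_dsum_mat_carrier[OF Vc] Suc.prems(1) by (rule adjoint_conj_mult)
  moreover have "(mat_adjoint (one_dsum_mat V) * B * one_dsum_mat V) $$ (i,j) = 0"
    if "i < Suc m" "j < Suc m" "i \<noteq> j" for i j
    using one_dsum_conj_offdiag_zero[OF Bc Vc _ diag[unfolded B'_def] that] border
    unfolding B_def by blast
  ultimately show ?case by auto
qed

lemma unitary_mat_conj_cancel:
  assumes uU: "unitary_mat n U" and A: "A \<in> carrier_mat n n"
  shows "U * (mat_adjoint U * A * U) * mat_adjoint U = A"
proof -
  have Uc: "U \<in> carrier_mat n n" and aU: "mat_adjoint U \<in> carrier_mat n n"
    and e1: "U * mat_adjoint U = 1\<^sub>m n" using uU unfolding unitary_mat_def by auto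
  have "U * (mat_adjoint U * A * U) = U * (mat_adjoint U * A) * U"
    using Uc aU A by (subst assoc_mult_mat[of U n n _ n U n], auto)
  also have "U * (mat_adjoint U * A) = U * mat_adjoint U * A"
    using Uc aU A by (subst assoc_mult_mat[OF Uc aU A], simp)
  also have "\<dots> = A" using e1 A by simp
  finally have "U * (mat_adjoint U * A * U) * mat_adjoint U = A * U * mat_adjoint U" by simp
  also have "\<dots> = A * (U * mat_adjoint U)" using A Uc aU by (rule assoc_mult_mat)
  also have "\<dots> = A" using e1 A by simp
  finally show ?thesis .
qed

lemma hermitian_spectral_decomposition:
  assumes A: "A \<in> carrier_mat n n" and h: "hermitian_mat A"
  shows "\<exists>U xs. unitary_mat n U \<and> length xs = n \<and> A = U * diag_of xs * mat_adjoint U"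
proof -
  obtain U where uU: "unitary_mat n U"
    and off: "\<And>i j. i < n \<Longrightarrow> j < n \<Longrightarrow> i \<noteq> j \<Longrightarrow> (mat_adjoint U * A * U) $$ (i,j) = 0"
    using hermitian_unitary_diagonalizable[OF A h] by blast
  have Uc: "U \<in> carrier_mat n n" using uU unfolding unitary_mat_def by auto
  define D where "D = mat_adjoint U * A * U"
  have Dc: "D \<in> carrier_mat n n" unfolding D_def using Uc A by auto
  have hD: "hermitian_mat D" unfolding D_def by (rule hermitian_mat_adjoint_conj[OF h A Uc])
  define xs where "xs = map (\<lambda>i. Re (D$$(i,i))) [0..<n]"
  have lxs: "length xs = n" unfolding xs_def by simp
  have "D = diag_of xs"
  proof (rule eq_matI)
    fix i j assume "i < dim_row (diag_of xs)" "j < dim_col (diag_of xs)"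
    hence ij: "i < n" "j < n" using lxs by auto
    show "D $$ (i,j) = diag_of xs $$ (i,j)"
    proof (cases "i = j")
      case True
      have "D $$ (i,i) = cnj (D $$ (i,i))" by (rule hermitian_mat_index[OF hD Dc ij(1) ij(1)])
      hence "Im (D $$ (i,i)) = 0" by (metis cnj.simps(2) complex_cnj_cancel_iff neg_equal_zero)
      hence "D $$ (i,i) = complex_of_real (Re (D $$ (i,i)))" by (simp add: complex_eq_iff)
      thus ?thesis using True ij lxs unfolding xs_def by simp
    next
      case False
      thus ?thesis using off[OF ij False] ij lxs unfolding D_def by simp
    qed
  qed (use Dc lxs in auto)
  hence "A = U * diag_of xs * mat_adjoint U" using unitary_mat_conj_cancel[OF uU A] unfolding D_def by simp
  thus ?thesis using uU lxs by blast
qed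

section \<open>Eigenvalue lists and the functional calculus\<close>

abbreviation linear_factors :: "real list \<Rightarrow> complex poly" where
  "linear_factors xs \<equiv> \<Prod>x\<leftarrow>xs. [:- complex_of_real x, 1:]"

lemma prod_list_map_mset_eq:
  fixes f :: "'a \<Rightarrow> 'b::comm_monoid_mult"
  assumes "mset xs = mset ys"
  shows "prod_list (map f xs) = prod_list (map f ys)"
proof -
  have "prod_list (map f xs) = prod_mset (image_mset f (mset xs))"
    by (simp only: prod_mset_prod_list[symmetric] mset_map)
  also have "\<dots> = prod_list (map f ys)"
    by (simp only: assms prod_mset_prod_list[symmetric] mset_map)
  finally show ?thesis .
qed

lemma linear_factors_nonzero: "linear_factors xs \<noteq> 0"
  by (simp add: prod_list_zero_iff, auto)

lemma order_linear_factors: "order a (linear_factors xs) = count (mset (map complex_of_real xs)) a"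
proof (induction xs)
  case Nil
  then show ?case by (simp add: order_0I)
next
  case (Cons x xs)
  have nz: "[:- complex_of_real x, 1:] * linear_factors xs \<noteq> 0"
    using linear_factors_nonzero[of "x # xs"] by simp
  have "order a ([:- complex_of_real x, 1:] * linear_factors xs) =
      order a [:- complex_of_real x, 1:] + order a (linear_factors xs)"
    by (rule order_mult[OF nz])
  thus ?case using Cons by (simp only: list.map prod_list.Cons order_linear' mset.simps count_add_mset) simp
qed

lemma linear_factors_eq_imp_mset_eq:
  assumes "linear_factors xs = linear_factors ys"
  shows "mset xs = mset ys"
proof -
  have "mset (map complex_of_real xs) = mset (map complex_of_real ys)"
    by (rule multiset_eqI, metis order_linear_factors assms)
  hence "image_mset Re (mset (map complex_of_real xs)) = image_mset Re (mset (map complex_of_real ys))" by simp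
  thus ?thesis by (simp add: multiset.map_comp o_def)
qed

lemma char_poly_diag_of: "char_poly (diag_of xs) = linear_factors xs"
proof -
  have "upper_triangular (diag_of xs)" unfolding upper_triangular_def by simp
  from char_poly_upper_triangular[OF diag_of_carrier this]
  have "char_poly (diag_of xs) = (\<Prod>a\<leftarrow>diag_mat (diag_of xs). [:- a, 1:])" .
  also have "diag_mat (diag_of xs) = map complex_of_real xs"
    unfolding diag_mat_def by (rule nth_equalityI, auto)
  finally show ?thesis by (simp add: o_def)
qed

lemma char_poly_unitary_conj_diag:
  assumes uU: "unitary_mat d U" and l: "length xs = d"
  shows "char_poly (U * diag_of xs * mat_adjoint U) = linear_factors xs"
proof -
  have Uc: "U \<in> carrier_mat d d" using uU unfolding unitary_mat_def by auto
  have aU: "mat_adjoint U \<in> carrier_mat d d" using Uc by simp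
  have Dc: "diag_of xs \<in> carrier_mat d d" using diag_of_carrier[of xs] l by simp
  have Ac: "U * diag_of xs * mat_adjoint U \<in> carrier_mat d d" using Uc aU Dc by (metis mult_carrier_mat)
  have dr: "dim_row (U * diag_of xs * mat_adjoint U) = d" using Ac by blast
  have e1: "U * mat_adjoint U = 1\<^sub>m d" and e2: "mat_adjoint U * U = 1\<^sub>m d" using uU unfolding unitary_mat_def by auto
  have "similar_mat_wit (U * diag_of xs * mat_adjoint U) (diag_of xs) U (mat_adjoint U)"
    unfolding similar_mat_wit_def Let_def dr using Ac Dc Uc aU e1 e2 by blast
  hence "similar_mat (U * diag_of xs * mat_adjoint U) (diag_of xs)" unfolding similar_mat_def by blast
  thus ?thesis using char_poly_similar char_poly_diag_of by metis
qed

lemma eig_desc_unitary_conj_diag: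
  assumes uU: "unitary_mat d U" and l: "length xs = d"
  shows "eig_desc d (U * diag_of xs * mat_adjoint U) = rev (sort xs)"
  unfolding eig_desc_def
proof (rule the_equality)
  have "mset xs = mset (rev (sort xs))" by simp
  hence "char_poly (U * diag_of xs * mat_adjoint U) = linear_factors (rev (sort xs))"
    unfolding char_poly_unitary_conj_diag[OF uU l] by (rule prod_list_map_mset_eq)
  thus "length (rev (sort xs)) = d \<and> sorted_wrt (\<ge>) (rev (sort xs)) \<and>
      char_poly (U * diag_of xs * mat_adjoint U) = linear_factors (rev (sort xs))"
    using l by (simp only: length_rev length_sort sorted_wrt_rev sorted_sort)
next
  fix zs assume zs: "length zs = d \<and> sorted_wrt (\<ge>) zs \<and>
      char_poly (U * diag_of xs * mat_adjoint U) = linear_factors zs"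
  hence "linear_factors xs = linear_factors zs" using char_poly_unitary_conj_diag[OF uU l] by metis
  hence "mset (rev zs) = mset xs" by (metis linear_factors_eq_imp_mset_eq mset_rev)
  moreover have "sorted (rev zs)" using zs by (simp add: sorted_wrt_rev)
  ultimately show "zs = rev (sort xs)" by (metis properties_for_sort rev_rev_ident)
qed

lemma unitary_conj_diag_permute:
  assumes uU: "unitary_mat d U" and p: "p permutes {..<d}"
  obtains U' where "unitary_mat d U'"
    "\<And>ys. length ys = d \<Longrightarrow> U * diag_of (permute_list p ys) * mat_adjoint U = U' * diag_of ys * mat_adjoint U'"
proof
  have Uc: "U \<in> carrier_mat d d" using uU by (rule unitary_mat_carrier)
  define U' where "U' = mat d d (\<lambda>(k,j). U $$ (k, inv_into UNIV p j))"
  have U'c: "U' \<in> carrier_mat d d" unfolding U'_def by simp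
  have U'p: "U' $$ (k, p i) = U $$ (k,i)" if "k < d" "i < d" for k i
    using that permutes_in_image[OF p] permutes_inverses(2)[OF p] by (simp add: U'_def)
  have reindex: "(\<Sum>j<d. f j) = (\<Sum>i<d. f (p i))" for f :: "nat \<Rightarrow> complex"
    using sum.permute[OF p, of f] by (simp add: o_def)
  show "unitary_mat d U'"
  proof (rule unitary_matI[OF U'c])
    fix j l assume jl: "j < d" "l < d"
    have "(\<Sum>i<d. U'$$(j,i) * cnj (U'$$(l,i))) = (\<Sum>i<d. U$$(j,i) * cnj (U$$(l,i)))"
      using jl by (subst reindex) (simp add: U'p)
    thus "(\<Sum>i<d. U'$$(j,i) * cnj (U'$$(l,i))) = of_bool (j = l)"
      using unitary_mat_rows_orthonormal[OF uU jl] by simp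
  qed
  fix ys :: "real list" assume ys: "length ys = d"
  have lp: "length (permute_list p ys) = d" using ys by simp
  show "U * diag_of (permute_list p ys) * mat_adjoint U = U' * diag_of ys * mat_adjoint U'"
  proof (rule eq_matI)
    fix k m assume "k < dim_row (U' * diag_of ys * mat_adjoint U')" "m < dim_col (U' * diag_of ys * mat_adjoint U')"
    hence km: "k < d" "m < d" using U'c by auto
    have "(U * diag_of (permute_list p ys) * mat_adjoint U) $$ (k,m) =
        (\<Sum>i<d. U$$(k,i) * (ys ! p i) * cnj (U$$(m,i)))"
      using ys p by (simp add: index_mult_diag_adjoint[OF Uc lp km] permute_list_nth)
    also have "\<dots> = (\<Sum>i<d. U'$$(k, p i) * (ys ! p i) * cnj (U'$$(m, p i)))"
      using km by (simp add: U'p)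
    also have "\<dots> = (U' * diag_of ys * mat_adjoint U') $$ (k,m)"
      using reindex[of "\<lambda>i. U'$$(k,i) * ys!i * cnj (U'$$(m,i))"]
      by (simp add: index_mult_diag_adjoint[OF U'c ys km])
    finally show "(U * diag_of (permute_list p ys) * mat_adjoint U) $$ (k,m) =
        (U' * diag_of ys * mat_adjoint U') $$ (k,m)" .
  qed (use Uc U'c ys in auto)
qed

lemma mat_fun_decomposition:
  assumes A: "A \<in> carrier_mat d d" and h: "hermitian_mat A"
  shows "\<exists>U xs. unitary_mat d U \<and> length xs = d \<and> A = U * diag_of xs * mat_adjoint U \<and>
      mat_fun d f A = U * diag_of (map f xs) * mat_adjoint U"
proof -
  obtain U xs where "unitary_mat d U" "length xs = d" "A = U * diag_of xs * mat_adjoint U"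
    using hermitian_spectral_decomposition[OF A h] by blast
  hence ex: "\<exists>B. \<exists>U xs. unitary_mat d U \<and> length xs = d \<and>
      A = U * diag_of xs * mat_adjoint U \<and> B = U * diag_of (map f xs) * mat_adjoint U" by blast
  show ?thesis unfolding mat_fun_def using someI_ex[OF ex] by blast
qed

lemma hermitian_eig_desc_decomposition:
  assumes A: "A \<in> carrier_mat d d" and h: "hermitian_mat A"
  obtains U where "unitary_mat d U" "length (eig_desc d A) = d" "sorted_wrt (\<ge>) (eig_desc d A)"
    "A = U * diag_of (eig_desc d A) * mat_adjoint U"
    "mat_fun d f A = U * diag_of (map f (eig_desc d A)) * mat_adjoint U"
proof -
  obtain V xs where uV: "unitary_mat d V" and l: "length xs = d" and AV: "A = V * diag_of xs * mat_adjoint V"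
    and fA: "mat_fun d f A = V * diag_of (map f xs) * mat_adjoint V"
    using mat_fun_decomposition[OF A h] by blast
  define e where "e = eig_desc d A"
  have e: "e = rev (sort xs)" unfolding e_def AV by (rule eig_desc_unitary_conj_diag[OF uV l])
  hence le: "length e = d" using l by simp
  obtain p where p: "p permutes {..<d}" and pe: "permute_list p e = xs"
    using mset_eq_permutation[of xs e] e le by auto
  obtain U where uU: "unitary_mat d U"
    and UV: "\<And>ys. length ys = d \<Longrightarrow> V * diag_of (permute_list p ys) * mat_adjoint V = U * diag_of ys * mat_adjoint U"
    using unitary_conj_diag_permute[OF uV p] by blast
  have "A = U * diag_of e * mat_adjoint U" using UV[OF le] unfolding AV pe .
  moreover have "map f xs = permute_list p (map f e)" using p le pe by (simp add: permute_list_map)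
  hence "mat_fun d f A = U * diag_of (map f e) * mat_adjoint U" using UV[of "map f e"] le fA by simp
  moreover have "sorted_wrt (\<ge>) e" unfolding e by (simp add: sorted_wrt_rev)
  ultimately show ?thesis using that uU le unfolding e_def by blast
qed

lemma unitary_diag_mult_col:
  assumes uW: "unitary_mat d W" and lb: "length b = d" and j: "j < d"
  shows "(W * diag_of b * mat_adjoint W) *\<^sub>v col W j = complex_of_real (b!j) \<cdot>\<^sub>v col W j"
proof -
  have Wc: "W \<in> carrier_mat d d" using uW by (rule unitary_mat_carrier)
  have WD: "W * diag_of b \<in> carrier_mat d d" using Wc lb by auto
  have "W * diag_of b * mat_adjoint W * W = W * diag_of b * (mat_adjoint W * W)"
    using Wc by (intro assoc_mult_mat[OF WD]) auto
  also have "\<dots> = W * diag_of b" using uW right_mult_one_mat[OF WD] unfolding unitary_mat_def by simp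
  finally have "(W * diag_of b * mat_adjoint W) *\<^sub>v col W j = col (W * diag_of b) j"
    using Wc WD j by (metis col_mult2 mat_adjoint_carrier mult_carrier_mat)
  also have "\<dots> = complex_of_real (b!j) \<cdot>\<^sub>v col W j"
  proof (rule eq_vecI)
    fix i assume "i < dim_vec (complex_of_real (b!j) \<cdot>\<^sub>v col W j)"
    hence "i < d" using Wc by simp
    thus "col (W * diag_of b) j $ i = (complex_of_real (b!j) \<cdot>\<^sub>v col W j) $ i"
      using Wc carrier_matD[OF WD] j index_mult_diag[OF Wc lb \<open>i < d\<close> j] by (simp add: mult.commute)
  qed (use Wc in simp)
  finally show ?thesis .
qed

lemma unitary_mat_col_norm:
  assumes uW: "unitary_mat d W" and j: "j < d"
  shows "conjugate (col W j) \<bullet> col W j = 1"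
proof -
  have "dim_row W = d" "dim_col W = d" using unitary_mat_carrier[OF uW] by auto
  thus ?thesis using unitary_mat_cols_orthonormal[OF uW j j] j by (simp add: scalar_prod_def atLeast0LessThan)
qed

lemma psd_mat_unitary_diag_nonneg:
  assumes p: "psd_mat d (W * diag_of b * mat_adjoint W)" and uW: "unitary_mat d W" and lb: "length b = d"
    and j: "j < d"
  shows "b!j \<ge> 0"
proof -
  have v: "col W j \<in> carrier_vec d" using unitary_mat_carrier[OF uW] by auto
  hence "0 \<le> Re (conjugate (col W j) \<bullet> ((W * diag_of b * mat_adjoint W) *\<^sub>v col W j))"
    using p unfolding psd_mat_def by blast
  thus ?thesis using v by (simp add: unitary_diag_mult_col[OF uW lb j] unitary_mat_col_norm[OF uW j])
qed

lemma invertible_mat_unitary_diag_nonzero: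
  assumes inv: "invertible_mat (W * diag_of b * mat_adjoint W)" and uW: "unitary_mat d W"
    and lb: "length b = d" and j: "j < d"
  shows "b!j \<noteq> 0"
proof
  assume b0: "b!j = 0"
  define A where "A = W * diag_of b * mat_adjoint W"
  have Wc: "W \<in> carrier_mat d d" using uW by (rule unitary_mat_carrier)
  have Ac: "A \<in> carrier_mat d d" unfolding A_def using Wc lb by auto
  have v: "col W j \<in> carrier_vec d" using Wc by auto
  obtain B where BA: "B * A = 1\<^sub>m d" and Bc: "B \<in> carrier_mat d d"
    using inv Ac unfolding A_def[symmetric] invertible_mat_def inverts_mat_def
    by (metis carrier_matD carrier_matI index_mult_mat(2,3) index_one_mat(2,3))
  have "col W j = B *\<^sub>v (A *\<^sub>v col W j)"
    using BA Bc Ac v by (metis assoc_mult_mat_vec one_mult_mat_vec)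
  also have "A *\<^sub>v col W j = 0\<^sub>v d"
    unfolding A_def unitary_diag_mult_col[OF uW lb j] b0 using Wc by (intro eq_vecI) auto
  also have "B *\<^sub>v 0\<^sub>v d = 0\<^sub>v d" using Bc by auto
  finally have "conjugate (col W j) \<bullet> col W j = 0" by simp
  thus False using unitary_mat_col_norm[OF uW j] by simp
qed

section \<open>Doubly stochastic matrices\<close>

lemma sorted_wrt_ge_antimono_on:
  fixes xs :: "'a::linorder list"
  assumes "sorted_wrt (\<ge>) xs"
  shows "antimono_on {..<length xs} (\<lambda>i. xs ! i)"
  unfolding monotone_on_def
proof (intro ballI impI)
  fix i j assume "i \<in> {..<length xs}" "j \<in> {..<length xs}" "i \<le> j"
  thus "xs ! j \<le> xs ! i"
    using sorted_wrt_nth_less[OF assms, of i j] by (cases "i = j") auto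
qed

definition doubly_stochastic :: "nat \<Rightarrow> (nat \<Rightarrow> nat \<Rightarrow> real) \<Rightarrow> bool" where
  "doubly_stochastic n D \<longleftrightarrow>
     (\<forall>i j. D j i \<ge> 0) \<and> (\<forall>j<n. (\<Sum>i<n. D j i) = 1) \<and> (\<forall>i<n. (\<Sum>j<n. D j i) = 1)"

lemma abel_sum_nonneg:
  fixes p e :: "nat \<Rightarrow> real"
  assumes "antimono_on {..<n} p" "n > 0 \<longrightarrow> p (n - 1) \<ge> 0" "\<forall>k\<le>n. 0 \<le> (\<Sum>i<k. e i)"
  shows "0 \<le> (\<Sum>i<n. p i * e i)"
  using assms
proof (induction n arbitrary: p)
  case 0
  then show ?case by simp
next
  case (Suc n)
  define q where "q i = p i - p n" for i
  have "(\<Sum>i<Suc n. p i * e i) = (\<Sum>i<Suc n. q i * e i) + p n * (\<Sum>i<Suc n. e i)"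
    unfolding q_def by (simp add: sum_distrib_left sum.distrib[symmetric] algebra_simps)
  also have "(\<Sum>i<Suc n. q i * e i) = (\<Sum>i<n. q i * e i)" unfolding q_def by simp
  finally have eq: "(\<Sum>i<Suc n. p i * e i) = (\<Sum>i<n. q i * e i) + p n * (\<Sum>i<Suc n. e i)" .
  have dq: "antimono_on {..<n} q" using Suc.prems(1) unfolding monotone_on_def q_def by auto
  have lq: "n > 0 \<longrightarrow> q (n - 1) \<ge> 0" using Suc.prems(1) unfolding monotone_on_def q_def by auto
  have eq': "\<forall>k\<le>n. 0 \<le> (\<Sum>i<k. e i)" using Suc.prems(3) by auto
  have 1: "0 \<le> (\<Sum>i<n. q i * e i)" by (rule Suc.IH[OF dq lq eq'])
  have pn: "0 \<le> p n" using Suc.prems(2) by simp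
  have "0 \<le> (\<Sum>i<Suc n. e i)" using Suc.prems(3) by blast
  hence 2: "0 \<le> p n * (\<Sum>i<Suc n. e i)" using pn by simp
  show ?case using eq 1 2 by simp
qed

lemma abel_sum_nonneg_zero_total:
  fixes p e :: "nat \<Rightarrow> real"
  assumes d: "antimono_on {..<n} p" and E: "\<forall>k\<le>n. 0 \<le> (\<Sum>i<k. e i)" and En: "(\<Sum>i<n. e i) = 0"
  shows "0 \<le> (\<Sum>i<n. p i * e i)"
proof (cases n)
  case 0 thus ?thesis by simp
next
  case (Suc m)
  define q where "q i = p i - p m" for i
  have "(\<Sum>i<n. p i * e i) = (\<Sum>i<n. q i * e i) + p m * (\<Sum>i<n. e i)"
    unfolding q_def by (simp add: sum_distrib_left sum.distrib[symmetric] algebra_simps)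
  hence eq: "(\<Sum>i<n. p i * e i) = (\<Sum>i<n. q i * e i)" using En by simp
  have dq: "antimono_on {..<n} q" using d unfolding monotone_on_def q_def by auto
  have lq: "n > 0 \<longrightarrow> q (n - 1) \<ge> 0" unfolding q_def Suc by simp
  show ?thesis using abel_sum_nonneg[OF dq lq E] eq by simp
qed

lemma doubly_stochastic_partial_sum_le:
  fixes c :: "nat \<Rightarrow> real"
  assumes D: "doubly_stochastic n D" and c: "antimono_on {..<n} c" and k: "k \<le> n"
  shows "(\<Sum>i<k. \<Sum>j<n. D j i * c j) \<le> (\<Sum>i<k. c i)"
proof (cases k)
  case 0 thus ?thesis by simp
next
  case (Suc k')
  define w where "w j = (\<Sum>i<k. D j i)" for j
  define t where "t = c k'"
  have w0: "0 \<le> w j" for j unfolding w_def using D unfolding doubly_stochastic_def by (auto intro: sum_nonneg)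
  have w1: "w j \<le> 1" if "j < n" for j
  proof -
    have "w j \<le> (\<Sum>i<n. D j i)" unfolding w_def using D k unfolding doubly_stochastic_def
      by (intro sum_mono2, auto)
    thus ?thesis using D that unfolding doubly_stochastic_def by auto
  qed
  have sw: "(\<Sum>j<n. w j) = real k"
  proof -
    have "(\<Sum>j<n. w j) = (\<Sum>i<k. \<Sum>j<n. D j i)" unfolding w_def by (rule sum.swap)
    also have "\<dots> = (\<Sum>i<k. 1)" using D k unfolding doubly_stochastic_def by (intro sum.cong, auto)
    finally show ?thesis by simp
  qed
  have lhs: "(\<Sum>i<k. \<Sum>j<n. D j i * c j) = (\<Sum>j<n. w j * c j)"
    unfolding w_def by (simp add: sum_distrib_right, rule sum.swap)
  have restrict: "(\<Sum>j<n. of_bool (j < k) * f j) = (\<Sum>j<k. f j)" for f :: "nat \<Rightarrow> real"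
  proof -
    have "(\<Sum>j<n. of_bool (j < k) * f j) = (\<Sum>j<n. if j \<in> {j. j < k} then f j else 0)"
      by (intro sum.cong) auto
    also have "\<dots> = (\<Sum>j\<in>{..<n} \<inter> {j. j < k}. f j)"
      by (simp only: sum.inter_restrict[symmetric] finite_lessThan)
    also have "{..<n} \<inter> {j. j < k} = {..<k}" using k by auto
    finally show ?thesis .
  qed
  text \<open>Every term is nonnegative: \<open>c\<close> is decreasing and \<open>0 \<le> w j \<le> 1\<close>.\<close>
  have pt: "(of_bool (j < k) - w j) * (c j - t) \<ge> 0" if "j < n" for j
  proof (cases "j < k")
    case True
    hence "c j \<ge> t" using c that k unfolding monotone_on_def t_def Suc by auto
    moreover have "of_bool (j < k) - w j \<ge> 0" using w1[OF that] True by simp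
    ultimately show ?thesis by simp
  next
    case False
    hence "c j \<le> t" using c that k unfolding monotone_on_def t_def Suc by auto
    moreover have "of_bool (j < k) - w j \<le> 0" using w0[of j] False by simp
    ultimately show ?thesis by (simp add: mult_nonpos_nonpos)
  qed
  have "0 \<le> (\<Sum>j<n. (of_bool (j < k) - w j) * (c j - t))" by (rule sum_nonneg) (use pt in auto)
  also have "\<dots> = (\<Sum>j<n. of_bool (j < k) * c j) - (\<Sum>j<n. w j * c j)
      - t * ((\<Sum>j<n. of_bool (j < k) * 1) - (\<Sum>j<n. w j))"
    by (simp add: algebra_simps sum_subtractf sum_distrib_left sum.distrib)
  also have "\<dots> = (\<Sum>i<k. c i) - (\<Sum>j<n. w j * c j)" unfolding restrict using sw by simp
  finally show ?thesis using lhs by simp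
qed

lemma doubly_stochastic_pairing_le:
  fixes p c :: "nat \<Rightarrow> real"
  assumes D: "doubly_stochastic n D" and p: "antimono_on {..<n} p" and c: "antimono_on {..<n} c"
  shows "(\<Sum>i<n. p i * (\<Sum>j<n. D j i * c j)) \<le> (\<Sum>i<n. p i * c i)"
proof -
  define e where "e i = c i - (\<Sum>j<n. D j i * c j)" for i
  have E: "\<forall>k\<le>n. 0 \<le> (\<Sum>i<k. e i)"
    unfolding e_def using doubly_stochastic_partial_sum_le[OF D c] by (simp add: sum_subtractf)
  have "(\<Sum>i<n. \<Sum>j<n. D j i * c j) = (\<Sum>j<n. \<Sum>i<n. D j i * c j)" by (rule sum.swap)
  also have "\<dots> = (\<Sum>j<n. (\<Sum>i<n. D j i) * c j)" by (simp add: sum_distrib_right)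
  also have "\<dots> = (\<Sum>j<n. c j)" using D unfolding doubly_stochastic_def by (intro sum.cong, auto)
  finally have En: "(\<Sum>i<n. e i) = 0" unfolding e_def by (simp add: sum_subtractf)
  have "0 \<le> (\<Sum>i<n. p i * e i)" by (rule abel_sum_nonneg_zero_total[OF p E En])
  thus ?thesis unfolding e_def by (simp add: algebra_simps sum_subtractf)
qed

lemma sum_lessThan_reflect: "(\<Sum>j<n. f (n - Suc j)) = (\<Sum>j<n. f j)"
  by (rule sum.reindex_bij_witness[of _ "\<lambda>j. n - Suc j" "\<lambda>j. n - Suc j"], auto)

lemma doubly_stochastic_pairing_ge:
  fixes p c :: "nat \<Rightarrow> real"
  assumes D: "doubly_stochastic n D" and p: "antimono_on {..<n} p" and c: "antimono_on {..<n} c"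
  shows "(\<Sum>i<n. p i * c (n - Suc i)) \<le> (\<Sum>i<n. p i * (\<Sum>j<n. D j i * c j))"
proof -
  define c' where "c' j = - c (n - Suc j)" for j
  define D' where "D' j i = D (n - Suc j) i" for j i
  have dc': "antimono_on {..<n} c'" using c unfolding monotone_on_def c'_def by auto
  have dD': "doubly_stochastic n D'" unfolding doubly_stochastic_def
  proof (intro conjI allI impI)
    show "D' j i \<ge> 0" for i j using D unfolding doubly_stochastic_def D'_def by auto
    show "(\<Sum>i<n. D' j i) = 1" if "j < n" for j using D that unfolding doubly_stochastic_def D'_def by auto
    show "(\<Sum>j<n. D' j i) = 1" if "i < n" for i using D that unfolding doubly_stochastic_def D'_def
      by (simp add: sum_lessThan_reflect[of "\<lambda>j. D j i"])
  qed
  have inner: "(\<Sum>j<n. D' j i * c' j) = - (\<Sum>j<n. D j i * c j)" for i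
  proof -
    have "(\<Sum>j<n. D' j i * c' j) = - (\<Sum>j<n. D (n - Suc j) i * c (n - Suc j))"
      unfolding D'_def c'_def by (simp add: sum_negf)
    also have "\<dots> = - (\<Sum>j<n. D j i * c j)" by (simp only: sum_lessThan_reflect[of "\<lambda>j. D j i * c j"])
    finally show ?thesis .
  qed
  from doubly_stochastic_pairing_le[OF dD' p dc'] have "(\<Sum>i<n. p i * - (\<Sum>j<n. D j i * c j)) \<le> (\<Sum>i<n. p i * c' i)"
    by (simp only: inner)
  thus ?thesis unfolding c'_def by (simp add: sum_negf)
qed

lemma doubly_stochastic_unitary_norm_square:
  assumes uM: "unitary_mat d M"
  shows "doubly_stochastic d (\<lambda>j i. (cmod (M$$(j,i)))^2)"
  unfolding doubly_stochastic_def
proof (intro conjI allI impI)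
  show "0 \<le> (cmod (M$$(j,i)))^2" for i j by simp
  show "(\<Sum>i<d. (cmod (M$$(j,i)))^2) = 1" if j: "j < d" for j
  proof -
    have "complex_of_real (\<Sum>i<d. (cmod (M$$(j,i)))^2) = (\<Sum>i<d. M$$(j,i) * cnj (M$$(j,i)))"
      by (simp add: complex_mult_cnj_eq_norm_square of_real_sum)
    also have "\<dots> = 1" using unitary_mat_rows_orthonormal[OF uM j j] by simp
    finally show ?thesis by (simp only: of_real_eq_1_iff)
  qed
  show "(\<Sum>j<d. (cmod (M$$(j,i)))^2) = 1" if i: "i < d" for i
  proof -
    have "complex_of_real (\<Sum>j<d. (cmod (M$$(j,i)))^2) = (\<Sum>j<d. cnj (M$$(j,i)) * M$$(j,i))"
      by (simp add: complex_mult_cnj_eq_norm_square of_real_sum mult.commute)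
    also have "\<dots> = 1" using unitary_mat_cols_orthonormal[OF uM i i] by simp
    finally show ?thesis by (simp only: of_real_eq_1_iff)
  qed
qed

lemma unitary_pairing_bounds:
  assumes uM: "unitary_mat d M" and p: "antimono_on {..<d} p" and c: "antimono_on {..<d} c"
  shows "(\<Sum>i<d. p i * c (d - Suc i)) \<le> (\<Sum>i<d. p i * (\<Sum>j<d. (cmod (M $$ (j,i)))^2 * c j))"
    and "(\<Sum>i<d. p i * (\<Sum>j<d. (cmod (M $$ (j,i)))^2 * c j)) \<le> (\<Sum>i<d. p i * c i)"
  using doubly_stochastic_pairing_ge[OF _ p c] doubly_stochastic_pairing_le[OF _ p c]
    doubly_stochastic_unitary_norm_square[OF uM] by blast+

section \<open>Interpolating between the identity and the exchange matrix\<close>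

text \<open>The matrix \<open>c \<cdot> 1 + i s \<cdot> J\<close>, where \<open>J\<close> is the exchange matrix
  (ones on the antidiagonal).\<close>

definition exchange_rotation_mat :: "nat \<Rightarrow> real \<Rightarrow> real \<Rightarrow> complex mat" where
  "exchange_rotation_mat n c s =
     mat n n (\<lambda>(j,i). Complex (c * of_bool (j = i)) (s * of_bool (j = n - Suc i)))"

lemma exchange_rotation_mat_index:
  "j < n \<Longrightarrow> i < n \<Longrightarrow>
   exchange_rotation_mat n c s $$ (j,i) = Complex (c * of_bool (j = i)) (s * of_bool (j = n - Suc i))"
  by (simp add: exchange_rotation_mat_def)

lemma exchange_rotation_mat_norm_square:
  "j < n \<Longrightarrow> i < n \<Longrightarrow>
   (cmod (exchange_rotation_mat n c s $$ (j,i)))^2 = c^2 * of_bool (j = i) + s^2 * of_bool (j = n - Suc i)"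
  by (simp add: exchange_rotation_mat_index cmod_def power2_eq_square)

lemma unitary_exchange_rotation_mat:
  assumes cs: "c^2 + s^2 = 1"
  shows "unitary_mat n (exchange_rotation_mat n c s)"
proof (rule unitary_matI)
  show "exchange_rotation_mat n c s \<in> carrier_mat n n" by (simp add: exchange_rotation_mat_def)
  fix j l assume jl: "j < n" "l < n"
  define r where "r x = n - Suc x" for x
  have "(\<Sum>i<n. exchange_rotation_mat n c s $$ (j,i) * cnj (exchange_rotation_mat n c s $$ (l,i))) =
     Complex (\<Sum>i<n. c^2 * (of_bool (j = i) * of_bool (l = i)) + s^2 * (of_bool (j = r i) * of_bool (l = r i)))
             (\<Sum>i<n. s * c * (of_bool (l = i) * of_bool (j = r i)) - s * c * (of_bool (j = i) * of_bool (l = r i)))"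
    using jl by (simp add: exchange_rotation_mat_index complex_eq_iff Re_sum Im_sum r_def power2_eq_square
        algebra_simps)
  also have "(\<Sum>i<n. c^2 * (of_bool (j = i) * of_bool (l = i)) + s^2 * (of_bool (j = r i) * of_bool (l = r i)))
      = c^2 * (\<Sum>i<n. of_bool (j = i) * of_bool (l = i)) + s^2 * (\<Sum>i<n. of_bool (j = r i) * of_bool (l = r i))"
    by (simp only: sum.distrib sum_distrib_left)
  also have "(\<Sum>i<n. of_bool (j = r i) * of_bool (l = r i)) = (\<Sum>i<n. of_bool (j = i) * of_bool (l = i) :: real)"
    unfolding r_def by (rule sum_lessThan_reflect)
  also have "(\<Sum>i<n. of_bool (j = i) * of_bool (l = i)) = (of_bool (l = j) :: real)"
    using jl by simp
  also have "(\<Sum>i<n. s * c * (of_bool (l = i) * of_bool (j = r i)) - s * c * (of_bool (j = i) * of_bool (l = r i)))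
      = s * c * (of_bool (j = r l) - of_bool (l = r j))"
    using jl by (simp add: sum_subtractf flip: sum_distrib_left right_diff_distrib)
  also have "of_bool (j = r l) - of_bool (l = r j) = (0 :: real)"
    using jl by (auto simp: r_def)
  finally show "(\<Sum>i<n. exchange_rotation_mat n c s $$ (j,i) * cnj (exchange_rotation_mat n c s $$ (l,i))) = of_bool (j = l)"
    using cs by (simp add: complex_eq_iff flip: distrib_right)
qed

lemma exchange_rotation_mat_pairing:
  "(\<Sum>i<n. p i * (\<Sum>j<n. (cmod (exchange_rotation_mat n c s $$ (j,i)))^2 * q j)) =
   c^2 * (\<Sum>i<n. p i * q i) + s^2 * (\<Sum>i<n. p i * q (n - Suc i))"
proof -
  have "(\<Sum>j<n. (cmod (exchange_rotation_mat n c s $$ (j,i)))^2 * q j) = c^2 * q i + s^2 * q (n - Suc i)"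
    if "i < n" for i
    using that by (simp add: exchange_rotation_mat_norm_square distrib_right sum.distrib mult.assoc
        flip: sum_distrib_left)
  hence "(\<Sum>i<n. p i * (\<Sum>j<n. (cmod (exchange_rotation_mat n c s $$ (j,i)))^2 * q j)) =
      (\<Sum>i<n. p i * (c^2 * q i + s^2 * q (n - Suc i)))" by simp
  also have "\<dots> = c^2 * (\<Sum>i<n. p i * q i) + s^2 * (\<Sum>i<n. p i * q (n - Suc i))"
    by (simp add: sum.distrib sum_distrib_left algebra_simps)
  finally show ?thesis .
qed

lemma unitary_pairing_interpolates:
  assumes "0 \<le> t" "t \<le> 1"
  shows "\<exists>M. unitary_mat d M \<and> (\<Sum>i<d. p i * (\<Sum>j<d. (cmod (M $$ (j,i)))^2 * c j)) =
    (1 - t) * (\<Sum>i<d. p i * c i) + t * (\<Sum>i<d. p i * c (d - Suc i))"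
proof -
  have "(sqrt (1 - t))^2 + (sqrt t)^2 = 1" using assms by simp
  thus ?thesis using assms
    by (intro exI[of _ "exchange_rotation_mat d (sqrt (1 - t)) (sqrt t)"])
      (simp add: unitary_exchange_rotation_mat exchange_rotation_mat_pairing)
qed

section \<open>Relative entropy of unitarily rotated states\<close>

lemma sum_swap_4: "(\<Sum>k<n. \<Sum>m<n. \<Sum>i<n. \<Sum>j<n. f k m i j) = (\<Sum>i<n. \<Sum>j<n. \<Sum>k<n. \<Sum>m<n. f k m i j)"
proof -
  have "(\<Sum>k<n. \<Sum>m<n. \<Sum>i<n. \<Sum>j<n. f k m i j) = (\<Sum>k<n. \<Sum>i<n. \<Sum>m<n. \<Sum>j<n. f k m i j)"
    by (rule sum.cong, simp, rule sum.swap)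
  also have "\<dots> = (\<Sum>k<n. \<Sum>i<n. \<Sum>j<n. \<Sum>m<n. f k m i j)"
    by (rule sum.cong, simp, rule sum.cong, simp, rule sum.swap)
  also have "\<dots> = (\<Sum>i<n. \<Sum>k<n. \<Sum>j<n. \<Sum>m<n. f k m i j)"
    by (rule sum.swap)
  also have "\<dots> = (\<Sum>i<n. \<Sum>j<n. \<Sum>k<n. \<Sum>m<n. f k m i j)"
    by (rule sum.cong, simp, rule sum.swap)
  finally show ?thesis .
qed

lemma mtrace_sum: "A \<in> carrier_mat d d \<Longrightarrow> mtrace A = (\<Sum>k<d. A $$ (k,k))"
  unfolding mtrace_def by auto

lemma mtrace_mult_unitary_diag_sum:
  assumes V: "V \<in> carrier_mat d d" and W: "W \<in> carrier_mat d d"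
  and la: "length a = d" and lb: "length b = d"
  shows "mtrace ((V * diag_of a * mat_adjoint V) * (W * diag_of b * mat_adjoint W)) =
    complex_of_real (\<Sum>i<d. \<Sum>j<d. a!i * b!j * (cmod (\<Sum>k<d. cnj (W$$(k,j)) * V$$(k,i)))^2)"
proof -
  have dims: "dim_row V = d" "dim_col V = d" "dim_row W = d" "dim_col W = d" using V W by auto
  define P where "P = V * diag_of a * mat_adjoint V"
  define Q where "Q = W * diag_of b * mat_adjoint W"
  have Pc: "P \<in> carrier_mat d d" unfolding P_def using V la by (metis mat_adjoint_carrier diag_of_carrier mult_carrier_mat)
  have Qc: "Q \<in> carrier_mat d d" unfolding Q_def using W lb by (metis mat_adjoint_carrier diag_of_carrier mult_carrier_mat)
  have "mtrace (P * Q) = (\<Sum>k<d. (P * Q) $$ (k,k))" using Pc Qc by (subst mtrace_sum, auto)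
  also have "\<dots> = (\<Sum>k<d. \<Sum>m<d. P $$ (k,m) * Q $$ (m,k))"
    using Pc Qc by (intro sum.cong, simp, subst index_mult_mat_sum, auto)
  also have "\<dots> = (\<Sum>k<d. \<Sum>m<d. (\<Sum>i<d. V$$(k,i) * complex_of_real (a!i) * cnj (V$$(m,i))) *
                                   (\<Sum>j<d. W$$(m,j) * complex_of_real (b!j) * cnj (W$$(k,j))))"
  proof (rule sum.cong[OF refl], rule sum.cong[OF refl])
    fix k m assume km: "k \<in> {..<d}" "m \<in> {..<d}"
    show "P $$ (k,m) * Q $$ (m,k) = (\<Sum>i<d. V$$(k,i) * complex_of_real (a!i) * cnj (V$$(m,i))) *
                                   (\<Sum>j<d. W$$(m,j) * complex_of_real (b!j) * cnj (W$$(k,j)))"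
      unfolding P_def Q_def using index_mult_diag_adjoint[OF V la, of k m] index_mult_diag_adjoint[OF W lb, of m k] km by simp
  qed
  also have "\<dots> = (\<Sum>k<d. \<Sum>m<d. \<Sum>i<d. \<Sum>j<d. (V$$(k,i) * complex_of_real (a!i) * cnj (V$$(m,i))) *
                                   (W$$(m,j) * complex_of_real (b!j) * cnj (W$$(k,j))))"
    by (simp only: sum_product)
  also have "\<dots> = (\<Sum>i<d. \<Sum>j<d. \<Sum>k<d. \<Sum>m<d. (V$$(k,i) * complex_of_real (a!i) * cnj (V$$(m,i))) *
                                   (W$$(m,j) * complex_of_real (b!j) * cnj (W$$(k,j))))"
    by (rule sum_swap_4)
  also have "\<dots> = (\<Sum>i<d. \<Sum>j<d. complex_of_real (a!i * b!j) *
        ((\<Sum>k<d. V$$(k,i) * cnj (W$$(k,j))) * (\<Sum>m<d. cnj (V$$(m,i)) * W$$(m,j))))"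
  proof (rule sum.cong[OF refl], rule sum.cong[OF refl])
    fix i j
    have "complex_of_real (a!i * b!j) * ((\<Sum>k<d. V$$(k,i) * cnj (W$$(k,j))) * (\<Sum>m<d. cnj (V$$(m,i)) * W$$(m,j)))
      = (\<Sum>k<d. \<Sum>m<d. complex_of_real (a!i * b!j) * ((V$$(k,i) * cnj (W$$(k,j))) * (cnj (V$$(m,i)) * W$$(m,j))))"
      by (subst sum_product, simp add: sum_distrib_left)
    also have "\<dots> = (\<Sum>k<d. \<Sum>m<d. (V$$(k,i) * complex_of_real (a!i) * cnj (V$$(m,i))) *
                                   (W$$(m,j) * complex_of_real (b!j) * cnj (W$$(k,j))))"
      by (rule sum.cong[OF refl], rule sum.cong[OF refl], simp add: mult_ac)
    finally show "(\<Sum>k<d. \<Sum>m<d. (V$$(k,i) * complex_of_real (a!i) * cnj (V$$(m,i))) *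
                                   (W$$(m,j) * complex_of_real (b!j) * cnj (W$$(k,j)))) =
        complex_of_real (a!i * b!j) * ((\<Sum>k<d. V$$(k,i) * cnj (W$$(k,j))) * (\<Sum>m<d. cnj (V$$(m,i)) * W$$(m,j)))" by simp
  qed
  also have "\<dots> = (\<Sum>i<d. \<Sum>j<d. complex_of_real (a!i * b!j * (cmod (\<Sum>k<d. cnj (W$$(k,j)) * V$$(k,i)))^2))"
  proof (rule sum.cong, simp, rule sum.cong, simp)
    fix i j
    define z where "z = (\<Sum>k<d. cnj (W$$(k,j)) * V$$(k,i))"
    have 1: "(\<Sum>k<d. V$$(k,i) * cnj (W$$(k,j))) = z" unfolding z_def by (simp add: mult.commute)
    have 2: "(\<Sum>m<d. cnj (V$$(m,i)) * W$$(m,j)) = cnj z" unfolding z_def by (simp add: mult.commute)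
    show "complex_of_real (a!i * b!j) * ((\<Sum>k<d. V$$(k,i) * cnj (W$$(k,j))) * (\<Sum>m<d. cnj (V$$(m,i)) * W$$(m,j)))
        = complex_of_real (a!i * b!j * (cmod z)^2)"
      unfolding 1 2 complex_mult_cnj_eq_norm_square by simp
  qed
  also have "\<dots> = complex_of_real (\<Sum>i<d. \<Sum>j<d. a!i * b!j * (cmod (\<Sum>k<d. cnj (W$$(k,j)) * V$$(k,i)))^2)"
    by (simp only: of_real_sum)
  finally show ?thesis unfolding P_def Q_def .
qed

lemma mtrace_minus:
  assumes "A \<in> carrier_mat d d" "B \<in> carrier_mat d d"
  shows "mtrace (A - B) = mtrace A - mtrace B"
proof -
  have "mtrace (A - B) = (\<Sum>k<d. (A - B) $$ (k,k))" using assms by (subst mtrace_sum, auto)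
  also have "\<dots> = (\<Sum>k<d. A $$ (k,k) - B $$ (k,k))" using assms by (intro sum.cong, auto)
  also have "\<dots> = mtrace A - mtrace B" using assms by (simp add: sum_subtractf mtrace_sum)
  finally show ?thesis .
qed

lemma conj_diag_adjoint_mult:
  fixes U V :: "complex mat"
  assumes Uc: "U \<in> carrier_mat d d" and Vc: "V \<in> carrier_mat d d" and la: "length a = d"
  shows "U * (V * diag_of a * mat_adjoint V) * mat_adjoint U = (U * V) * diag_of a * mat_adjoint (U * V)"
proof -
  have aU: "mat_adjoint U \<in> carrier_mat d d" and aV: "mat_adjoint V \<in> carrier_mat d d" using Uc Vc by auto
  have Dc: "diag_of a \<in> carrier_mat d d" using diag_of_carrier[of a] la by simp
  have VD: "V * diag_of a \<in> carrier_mat d d" using Vc Dc by simp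
  have UVD: "U * V * diag_of a \<in> carrier_mat d d" using Uc Vc Dc by simp
  have "U * (V * diag_of a * mat_adjoint V) = U * (V * diag_of a) * mat_adjoint V"
    by (rule assoc_mult_mat[symmetric, OF Uc VD aV])
  also have "U * (V * diag_of a) = U * V * diag_of a"
    by (rule assoc_mult_mat[symmetric, OF Uc Vc Dc])
  also have "U * V * diag_of a * mat_adjoint V * mat_adjoint U = U * V * diag_of a * (mat_adjoint V * mat_adjoint U)"
    by (rule assoc_mult_mat[OF UVD aV aU])
  also have "mat_adjoint V * mat_adjoint U = mat_adjoint (U * V)" by (rule mat_adjoint_mult[symmetric, OF Uc Vc])
  finally show ?thesis .
qed

lemma mtrace_mult_unitary_diag:
  assumes V: "V \<in> carrier_mat d d" and W: "W \<in> carrier_mat d d"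
    and la: "length a = d" and lb: "length b = d"
  shows "mtrace ((V * diag_of a * mat_adjoint V) * (W * diag_of b * mat_adjoint W)) =
    complex_of_real (\<Sum>i<d. \<Sum>j<d. a!i * b!j * (cmod ((mat_adjoint W * V) $$ (j,i)))^2)"
proof -
  have "(mat_adjoint W * V) $$ (j,i) = (\<Sum>k<d. cnj (W$$(k,j)) * V$$(k,i))" if "i < d" "j < d" for i j
    using V W that by (subst index_mult_mat_sum) auto
  thus ?thesis by (simp add: mtrace_mult_unitary_diag_sum[OF V W la lb])
qed

lemma mtrace_mult_unitary_diag_self:
  assumes uV: "unitary_mat d V" and la: "length a = d" and lb: "length b = d"
  shows "mtrace ((V * diag_of a * mat_adjoint V) * (V * diag_of b * mat_adjoint V)) =
    complex_of_real (\<Sum>i<d. a!i * b!i)"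
proof -
  have Vc: "V \<in> carrier_mat d d" using uV by (rule unitary_mat_carrier)
  have one: "mat_adjoint V * V = 1\<^sub>m d" using uV unfolding unitary_mat_def by simp
  have "(\<Sum>j<d. a!i * b!j * (cmod ((1\<^sub>m d :: complex mat) $$ (j,i)))^2) =
      (\<Sum>j<d. if j = i then a!i * b!j else 0)" if "i < d" for i
    using that by (intro sum.cong) auto
  thus ?thesis using mtrace_mult_unitary_diag[OF Vc Vc la lb, unfolded one] by simp
qed

lemma sum_nth_mset_eq:
  fixes f :: "'a \<Rightarrow> 'b::comm_monoid_add"
  assumes m: "mset xs = mset ys" and l: "length xs = d"
  shows "(\<Sum>i<d. f (xs!i)) = (\<Sum>i<d. f (ys!i))"
proof -
  have ly: "length ys = d" using mset_eq_length[OF m] l by simp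
  have "(\<Sum>i<d. f (xs!i)) = sum_list (map f xs)" using l by (simp add: sum_list_sum_nth atLeast0LessThan)
  also have "\<dots> = sum_list (map f ys)" by (metis m mset_map sum_mset_sum_list)
  also have "\<dots> = (\<Sum>i<d. f (ys!i))" using ly by (simp add: sum_list_sum_nth atLeast0LessThan)
  finally show ?thesis .
qed

lemma hermitian_diag_of: "hermitian_mat (diag_of xs)"
  by (rule hermitian_matI[OF diag_of_carrier]) simp

lemma qrel_entropy_unitary_diag:
  assumes uV: "unitary_mat d V" and uW: "unitary_mat d W" and la: "length a = d" and lb: "length b = d"
    and ln_\<sigma>: "mat_fun d ln (W * diag_of b * mat_adjoint W) = W * diag_of (map ln b) * mat_adjoint W"
  shows "qrel_entropy d (V * diag_of a * mat_adjoint V) (W * diag_of b * mat_adjoint W) =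
    (\<Sum>i<d. a!i * ln (a!i)) - (\<Sum>i<d. a!i * (\<Sum>j<d. (cmod ((mat_adjoint W * V) $$ (j,i)))^2 * ln (b!j)))"
proof -
  define X where "X = V * diag_of a * mat_adjoint V"
  have Vc: "V \<in> carrier_mat d d" and Wc: "W \<in> carrier_mat d d"
    using uV uW by (simp_all add: unitary_mat_carrier)
  have Xc: "X \<in> carrier_mat d d" unfolding X_def using Vc la by auto
  have Dc: "diag_of a \<in> carrier_mat d d" using la by auto
  have hX: "hermitian_mat X"
    using hermitian_mat_adjoint_conj[OF hermitian_diag_of Dc, of "mat_adjoint V"] Vc
    unfolding X_def by simp
  obtain V' p where uV': "unitary_mat d V'" and lp: "length p = d" and XV': "X = V' * diag_of p * mat_adjoint V'"
    and ln_X: "mat_fun d ln X = V' * diag_of (map ln p) * mat_adjoint V'"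
    using mat_fun_decomposition[OF Xc hX] by blast
  have "rev (sort p) = rev (sort a)"
    using eig_desc_unitary_conj_diag[OF uV' lp] eig_desc_unitary_conj_diag[OF uV la] XV'
    unfolding X_def by metis
  hence "mset p = mset a" by (metis mset_sort rev_rev_ident)
  hence "mtrace (X * mat_fun d ln X) = complex_of_real (\<Sum>i<d. a!i * ln (a!i))"
    using sum_nth_mset_eq[of p a d "\<lambda>x. x * ln x"] lp
    unfolding ln_X by (subst XV') (simp add: mtrace_mult_unitary_diag_self[OF uV'])
  moreover have "mtrace (X * mat_fun d ln (W * diag_of b * mat_adjoint W)) = complex_of_real
      (\<Sum>i<d. a!i * (\<Sum>j<d. (cmod ((mat_adjoint W * V) $$ (j,i)))^2 * ln (b!j)))"
    unfolding ln_\<sigma> X_def using la lb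
    by (simp add: mtrace_mult_unitary_diag[OF Vc Wc] sum_distrib_left mult_ac)
  moreover have "mat_fun d ln X \<in> carrier_mat d d"
    and "mat_fun d ln (W * diag_of b * mat_adjoint W) \<in> carrier_mat d d"
    using unitary_mat_carrier[OF uV'] lp Wc lb unfolding ln_X ln_\<sigma> by auto
  ultimately show ?thesis
    using Xc unfolding qrel_entropy_def X_def[symmetric]
    by (simp add: mult_minus_distrib_mat[of X d d] mtrace_minus[of _ d])
qed

lemma crel_entropy_of_positive:
  assumes "length q = length p" "\<And>j. j < length p \<Longrightarrow> 0 < q ! j"
  shows "crel_entropy p q = ereal ((\<Sum>j<length p. p!j * ln (p!j)) - (\<Sum>j<length p. p!j * ln (q!j)))"
proof -
  have "\<forall>j < length p. q ! j = 0 \<longrightarrow> p ! j = 0" using assms(2) by (metis less_irrefl)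
  hence "crel_entropy p q =
      ereal (\<Sum>j<length p. if p ! j = 0 then 0 else p ! j * (ln (p ! j) - ln (q ! j)))"
    unfolding crel_entropy_def by (rule if_P)
  also have "(\<Sum>j<length p. if p ! j = 0 then 0 else p ! j * (ln (p ! j) - ln (q ! j))) =
      (\<Sum>j<length p. p!j * ln (p!j) - p!j * ln (q!j))"
    by (intro sum.cong) (auto simp: algebra_simps)
  finally show ?thesis by (simp only: sum_subtractf)
qed

lemma image_ereal_eq_interval:
  fixes f :: "'a \<Rightarrow> real"
  assumes bounds: "\<And>x. x \<in> A \<Longrightarrow> lo \<le> f x \<and> f x \<le> hi"
    and interpolate: "\<And>t. 0 \<le> t \<Longrightarrow> t \<le> 1 \<Longrightarrow> \<exists>x\<in>A. f x = (1 - t) * lo + t * hi"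
  shows "lo \<le> hi" "(\<lambda>x. ereal (f x)) ` A = {ereal lo .. ereal hi}"
proof -
  obtain x where "x \<in> A" "f x = lo" using interpolate[of 0] by auto
  thus "lo \<le> hi" using bounds by fastforce
  have attained: "ereal r \<in> (\<lambda>x. ereal (f x)) ` A" if r: "lo \<le> r" "r \<le> hi" for r
  proof -
    define t where "t = (if hi = lo then 0 else (r - lo) / (hi - lo))"
    have "0 \<le> t" "t \<le> 1" "(1 - t) * lo + t * hi = r"
      using r by (auto simp: t_def field_simps)
    then obtain x where "x \<in> A" "f x = r" using interpolate by metis
    thus ?thesis by (intro image_eqI[where x = x]) simp_all
  qed
  show "(\<lambda>x. ereal (f x)) ` A = {ereal lo .. ereal hi}"
  proof (intro equalityI subsetI)
    fix y assume "y \<in> (\<lambda>x. ereal (f x)) ` A"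
    thus "y \<in> {ereal lo .. ereal hi}" using bounds by auto
  next
    fix y assume y: "y \<in> {ereal lo .. ereal hi}"
    then obtain r where "y = ereal r" by (cases y) auto
    with y attained show "y \<in> (\<lambda>x. ereal (f x)) ` A" by auto
  qed
qed

lemma qrel_entropy_unitary_orbit:
  fixes e q :: "real list"
  assumes uV: "unitary_mat d V" and uW: "unitary_mat d W" and le: "length e = d" and lq: "length q = d"
    and se: "sorted_wrt (\<ge>) e" and sq: "sorted_wrt (\<ge>) q" and q_pos: "\<And>j. j < d \<Longrightarrow> 0 < q ! j"
    and ln_\<sigma>: "mat_fun d ln (W * diag_of q * mat_adjoint W) = W * diag_of (map ln q) * mat_adjoint W"
  defines "lo \<equiv> (\<Sum>i<d. e!i * ln (e!i)) - (\<Sum>i<d. e!i * ln (q!i))"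
    and "hi \<equiv> (\<Sum>i<d. e!i * ln (e!i)) - (\<Sum>i<d. e!i * ln (q ! (d - Suc i)))"
  shows "lo \<le> hi"
    and "(\<lambda>U. ereal (qrel_entropy d (U * (V * diag_of e * mat_adjoint V) * mat_adjoint U)
      (W * diag_of q * mat_adjoint W))) ` {U. unitary_mat d U} = {ereal lo .. ereal hi}"
proof -
  have anti_e: "antimono_on {..<d} (\<lambda>i. e ! i)" using sorted_wrt_ge_antimono_on[OF se] le by simp
  have anti_ln_q: "antimono_on {..<d} (\<lambda>j. ln (q ! j))"
    using sorted_wrt_ge_antimono_on[OF sq] lq q_pos by (auto simp: monotone_on_def)
  define F where "F U = (\<Sum>i<d. e!i * (\<Sum>j<d. (cmod ((mat_adjoint W * (U * V)) $$ (j,i)))^2 * ln (q!j)))" for U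
  define E where "E = (\<Sum>i<d. e!i * ln (e!i))"
  define Tmax where "Tmax = (\<Sum>i<d. e!i * ln (q!i))"
  define Tmin where "Tmin = (\<Sum>i<d. e!i * ln (q ! (d - Suc i)))"
  have "qrel_entropy d (U * (V * diag_of e * mat_adjoint V) * mat_adjoint U) (W * diag_of q * mat_adjoint W)
      = E - F U" if uU: "unitary_mat d U" for U
    using qrel_entropy_unitary_diag[OF unitary_mat_mult[OF uU uV] uW le lq ln_\<sigma>]
      conj_diag_adjoint_mult[OF unitary_mat_carrier[OF uU] unitary_mat_carrier[OF uV] le]
    unfolding E_def F_def by simp
  moreover have "E - Tmax \<le> E - F U \<and> E - F U \<le> E - Tmin" if "U \<in> {U. unitary_mat d U}" for U
    using unitary_pairing_bounds[OF unitary_mat_mult[OF unitary_mat_adjoint[OF uW] unitary_mat_mult[OF _ uV]]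
        anti_e anti_ln_q] that
    unfolding F_def Tmin_def Tmax_def by force
  moreover have "\<exists>U\<in>{U. unitary_mat d U}. E - F U = (1 - t) * (E - Tmax) + t * (E - Tmin)"
    if t: "0 \<le> t" "t \<le> 1" for t
  proof -
    obtain M where uM: "unitary_mat d M" and M: "(\<Sum>i<d. e!i * (\<Sum>j<d. (cmod (M $$ (j,i)))^2 * ln (q!j))) =
        (1 - t) * Tmax + t * Tmin"
      using unitary_pairing_interpolates[OF t, of d "\<lambda>i. e!i" "\<lambda>j. ln (q!j)"] unfolding Tmax_def Tmin_def by blast
    have "F (W * M * mat_adjoint V) = (1 - t) * Tmax + t * Tmin"
      unfolding F_def unitary_sandwich_cancel[OF uV uW unitary_mat_carrier[OF uM]] by (rule M)
    moreover have "unitary_mat d (W * M * mat_adjoint V)"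
      using unitary_mat_mult[OF unitary_mat_mult[OF uW uM] unitary_mat_adjoint[OF uV]] .
    ultimately show ?thesis by (intro bexI[where x = "W * M * mat_adjoint V"]) (auto simp: algebra_simps)
  qed
  ultimately show "lo \<le> hi"
    and "(\<lambda>U. ereal (qrel_entropy d (U * (V * diag_of e * mat_adjoint V) * mat_adjoint U)
      (W * diag_of q * mat_adjoint W))) ` {U. unitary_mat d U} = {ereal lo .. ereal hi}"
    using image_ereal_eq_interval[of "{U. unitary_mat d U}" "E - Tmax" "\<lambda>U. E - F U" "E - Tmin"]
    unfolding lo_def hi_def E_def Tmax_def Tmin_def by simp_all
qed

theorem theorem3:
  fixes d :: nat and \<rho> \<sigma> :: "complex mat"
  assumes "density_mat d \<rho>" and "density_mat d \<sigma>" and "invertible_mat \<sigma>"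
  defines "S \<equiv> (\<lambda>U. ereal (qrel_entropy d (U * \<rho> * mat_adjoint U) \<sigma>))"
  defines "Hmin \<equiv> crel_entropy (eig_desc d \<rho>) (eig_desc d \<sigma>)"
  defines "Hmax \<equiv> crel_entropy (eig_desc d \<rho>) (eig_asc d \<sigma>)"
  shows "(\<exists>U. unitary_mat d U \<and> S U = Hmin) \<and> (\<forall>U. unitary_mat d U \<longrightarrow> Hmin \<le> S U)
     \<and> (\<exists>U. unitary_mat d U \<and> S U = Hmax) \<and> (\<forall>U. unitary_mat d U \<longrightarrow> S U \<le> Hmax)
     \<and> S ` {U. unitary_mat d U} = {Hmin .. Hmax}"
proof -
  have \<rho>: "\<rho> \<in> carrier_mat d d" "hermitian_mat \<rho>" and \<sigma>: "\<sigma> \<in> carrier_mat d d" "hermitian_mat \<sigma>"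
    and psd_\<sigma>: "psd_mat d \<sigma>" using assms(1,2) unfolding density_mat_def psd_mat_def by auto
  define e where "e = eig_desc d \<rho>"
  define q where "q = eig_desc d \<sigma>"
  obtain V where uV: "unitary_mat d V" and le: "length e = d" and se: "sorted_wrt (\<ge>) e"
    and \<rho>V: "\<rho> = V * diag_of e * mat_adjoint V"
    using hermitian_eig_desc_decomposition[OF \<rho>, of ln] unfolding e_def by blast
  obtain W where uW: "unitary_mat d W" and lq: "length q = d" and sq: "sorted_wrt (\<ge>) q"
    and \<sigma>W: "\<sigma> = W * diag_of q * mat_adjoint W" and ln_\<sigma>: "mat_fun d ln \<sigma> = W * diag_of (map ln q) * mat_adjoint W"
    using hermitian_eig_desc_decomposition[OF \<sigma>, of ln] unfolding q_def by blast
  have q_pos: "0 < q ! j" if "j < d" for j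
    using psd_mat_unitary_diag_nonneg[OF psd_\<sigma>[unfolded \<sigma>W] uW lq that]
      invertible_mat_unitary_diag_nonzero[OF assms(3)[unfolded \<sigma>W] uW lq that] by linarith
  note orbit = qrel_entropy_unitary_orbit[OF uV uW le lq se sq q_pos ln_\<sigma>[unfolded \<sigma>W]]
  have "Hmin = ereal ((\<Sum>i<d. e!i * ln (e!i)) - (\<Sum>i<d. e!i * ln (q!i)))"
    using crel_entropy_of_positive[of q e] le lq q_pos unfolding Hmin_def e_def q_def by simp
  moreover have "Hmax = ereal ((\<Sum>i<d. e!i * ln (e!i)) - (\<Sum>i<d. e!i * ln (q ! (d - Suc i))))"
    using crel_entropy_of_positive[of "rev q" e] le lq q_pos
    unfolding Hmax_def eig_asc_def e_def q_def by (simp add: rev_nth)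
  ultimately have le: "Hmin \<le> Hmax" and img: "S ` {U. unitary_mat d U} = {Hmin .. Hmax}"
    using orbit unfolding S_def \<rho>V \<sigma>W by simp_all
  have "Hmin \<le> S U \<and> S U \<le> Hmax" if "unitary_mat d U" for U
    using imageI[of U "{U. unitary_mat d U}" S] that unfolding img by simp
  moreover have "Hmin \<in> S ` {U. unitary_mat d U}" "Hmax \<in> S ` {U. unitary_mat d U}"
    using le img by simp_all
  ultimately show ?thesis using img by blast
qed

end
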